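(* Let $N\ge1$ and $\mathtt{SNR}=\infty$. Then $$\frac{\mathbb E\!\left[\sum_{n=1}^N\frac{\mathsf g_n}{\mathsf I_n}\right]}{\mathbb E\!\left[\max\left\{\frac{\mathsf g_1}{\mathsf I_1},\dots,\frac{\mathsf g_N}{\mathsf I_N}\right\}\right]}\le\frac{N\,\mathbb E[\mathsf g_1]}{\mathbb E[\max\{\mathsf g_1,\dots,\mathsf g_N\}]}.$$ In particular, for Rayleigh fading ($m_{\mathrm D}=m_{\mathrm I}=1$) the ratio of mean post-combiner SINR of MRC to that of selection combining is at most $N\left(\sum_{n=1}^N\frac1n\right)^{-1}$, the corresponding ratio in the interference-free case.
   Context: Let $\Phi=\{\mathsf x_i\}_{i\ge0}$ be a homogeneous Poisson point process on $\mathbb R^2$ of intensity $\lambda>0$. A receiver with $N$ antennas is at the origin; the desired transmitter is at distance $d>0$; $\alpha>2$. $\mathsf g_1,\dots,\mathsf g_N$ are i.i.d. Gamma with shape $m_{\mathrm D}$ (a positive integer) and scale $1/m_{\mathrm D}$; $\mathsf h_{n,i}$ are i.i.d. Gamma with shape $m_{\mathrm I}>0$ and scale $1/m_{\mathrm I}$; all mutually independent and independent of $\Phi$. $\mathsf I_n=d^{\alpha}\sum_i\mathsf h_{n,i}\|\mathsf x_i\|^{-\alpha}$ (all $\mathsf I_n$ share the same point process $\Phi$ and are identically distributed). The numerator is the mean post-combiner SINR of MRC and the denominator the mean SINR of selection combining (which picks the branch with largest $\mathsf g_n/\mathsf I_n$). *)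

theory Defs
  imports "HOL-Probability.Probability"
begin

definition gamma_density :: "real \<Rightarrow> real \<Rightarrow> real \<Rightarrow> real" where
  "gamma_density k \<theta> t =
     (if 0 < t then t powr (k - 1) * exp (- t / \<theta>) / (Gamma k * \<theta> powr k) else 0)"

text \<open>A random point configuration in the plane, given by an enumeration of its points.
  Number of points in a set B.\<close>
definition pcount :: "(nat \<Rightarrow> 'a \<Rightarrow> real^2) \<Rightarrow> (real^2) set \<Rightarrow> 'a \<Rightarrow> nat" where
  "pcount x B \<omega> = card {i. x i \<omega> \<in> B}"

definition is_ppp :: "'a measure \<Rightarrow> real \<Rightarrow> (nat \<Rightarrow> 'a \<Rightarrow> real^2) \<Rightarrow> bool" where
  "is_ppp M lam x \<longleftrightarrow>
     (\<forall>i. x i \<in> borel_measurable M) \<and>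
     (AE \<omega> in M. inj (\<lambda>i. x i \<omega>) \<and> (\<forall>B. bounded B \<longrightarrow> finite {i. x i \<omega> \<in> B})) \<and>
     (\<forall>B k. B \<in> sets borel \<and> bounded B \<longrightarrow>
        measure M {\<omega> \<in> space M. pcount x B \<omega> = k} =
          (lam * measure lborel B) ^ k / fact k * exp (- (lam * measure lborel B))) \<and>
     (\<forall>(B :: nat \<Rightarrow> (real^2) set) J. finite J \<and> (\<forall>j\<in>J. B j \<in> sets borel \<and> bounded (B j))
        \<and> disjoint_family_on B J \<longrightarrow>
        prob_space.indep_vars M (\<lambda>_. count_space UNIV) (\<lambda>j \<omega>. pcount x (B j) \<omega>) J)"

definition interf :: "real \<Rightarrow> real \<Rightarrow> (nat \<Rightarrow> nat \<Rightarrow> 'a \<Rightarrow> real) \<Rightarrow> (nat \<Rightarrow> 'a \<Rightarrow> real^2)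
                      \<Rightarrow> nat \<Rightarrow> 'a \<Rightarrow> real" where
  "interf d \<alpha> h x n \<omega> = d powr \<alpha> * (\<Sum>i. h n i \<omega> * norm (x i \<omega>) powr (- \<alpha>))"

end

theory Submission
  imports Defs
begin

(*
  Write Y_n = 1 / I_n. The gains g_n are i.i.d. and independent of the point process and of the
  interference fading, hence of every Y_n; so MRC has mean E[g_1] * sum_n E[Y_n].
  For selection combining, split max_n g_n evenly among the indices attaining it. The share
  F_n(g) of index n satisfies sum_n F_n(g) Y_n <= max_n g_n Y_n, F_n(g) is independent of Y_n,
  and by exchangeability of g every E[F_n(g)] equals E[max_n g_n] / N. Hence
  E[max_n g_n Y_n] >= E[max_n g_n] / N * sum_n E[Y_n], which is the claimed bound.
  For exponential gains E[max_n g_n] is the harmonic number H_N. The Poisson process only enters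
  to show that for alpha > 2 the interference series converges almost surely.
*)

section \<open>Independent sub-\<open>\<sigma>\<close>-algebras and products of integrals\<close>

lemma sets_vimage_algebra_subset:
  assumes "f \<in> measurable A T"
  shows "sets (vimage_algebra (space A) f T) \<subseteq> sets A"
proof -
  have "f \<in> space A \<rightarrow> space T"
    using measurable_space[OF assms] by auto
  then show ?thesis
    using measurable_sets[OF assms] by (auto simp: sets_vimage_algebra2)
qed

lemma (in prob_space) indep_set_mono:
  "indep_set A B \<Longrightarrow> A' \<subseteq> A \<Longrightarrow> B' \<subseteq> B \<Longrightarrow> indep_set A' B'"
  unfolding indep_sets2_eq by blast

lemma (in prob_space) indep_set_commute:
  assumes "indep_set A B"
  shows "indep_set B A"
  unfolding indep_sets2_eq
proof (intro conjI ballI)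
  show "B \<subseteq> events" "A \<subseteq> events"
    using assms by (simp_all add: indep_sets2_eq)
  fix b a assume "b \<in> B" "a \<in> A"
  then have "prob (a \<inter> b) = prob a * prob b"
    using assms by (simp add: indep_sets2_eq)
  then show "prob (b \<inter> a) = prob b * prob a"
    by (simp add: Int_commute mult.commute)
qed

lemma (in prob_space) indep_var_commute: "indep_var S X T Y \<Longrightarrow> indep_var T Y S X"
  unfolding indep_var_eq by (blast intro: indep_set_commute)

lemma (in prob_space) indep_var_sub_sigma_algebras:
  assumes indep: "indep_set (sets A) (sets B)"
    and space: "space A = space M" "space B = space M"
    and U: "U \<in> measurable A S" and V: "V \<in> measurable B T"
  shows "indep_var S U T V"
proof -
  have "sets A \<subseteq> events" "sets B \<subseteq> events"
    using indep by (auto simp: indep_sets2_eq)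
  then have "random_variable S U" "random_variable T V"
    using measurable_mono[of S S A M] measurable_mono[of T T B M] U V space by auto
  moreover have "sigma_sets (space M) {U -` X \<inter> space M |X. X \<in> sets S} \<subseteq> sets A"
    using sets_vimage_algebra_subset[OF U] space by (simp add: sets_vimage_algebra)
  moreover have "sigma_sets (space M) {V -` X \<inter> space M |X. X \<in> sets T} \<subseteq> sets B"
    using sets_vimage_algebra_subset[OF V] space by (simp add: sets_vimage_algebra)
  ultimately show ?thesis
    unfolding indep_var_eq using indep_set_mono[OF indep] by blast
qed

text \<open>The \<open>\<sigma>\<close>-algebra generated by the intersections \<open>a \<inter> c\<close> is the join of \<open>A\<close> and \<open>C\<close>.\<close>
lemma (in prob_space) indep_set_join:
  assumes AD: "indep_set A D" and BC: "indep_set B C" and "B \<subseteq> D" "C \<subseteq> D"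
    and B: "sigma_algebra (space M) B" and D: "sigma_algebra (space M) D"
    and A: "sigma_algebra (space M) A" and C: "sigma_algebra (space M) C"
  shows "indep_set B (sigma_sets (space M) {a \<inter> c |a c. a \<in> A \<and> c \<in> C})"
proof -
  interpret A: sigma_algebra "space M" A by fact
  interpret B: sigma_algebra "space M" B by fact
  interpret C: sigma_algebra "space M" C by fact
  interpret D: sigma_algebra "space M" D by fact
  let ?E = "{a \<inter> c |a c. a \<in> A \<and> c \<in> C}"
  have "indep_set B ?E"
    unfolding indep_sets2_eq
  proof (intro conjI ballI)
    show "B \<subseteq> events" using BC by (simp add: indep_sets2_eq)
    show "?E \<subseteq> events" using AD BC by (auto simp: indep_sets2_eq)
    fix b e assume "b \<in> B" "e \<in> ?E"
    then obtain a c where ac: "a \<in> A" "c \<in> C" "e = a \<inter> c" by blast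
    have "b \<inter> c \<in> D" using \<open>b \<in> B\<close> ac assms(3,4) by blast
    then have "prob (a \<inter> (b \<inter> c)) = prob a * prob (b \<inter> c)"
      using AD ac by (simp add: indep_sets2_eq)
    moreover have "prob (b \<inter> c) = prob b * prob c"
      using BC \<open>b \<in> B\<close> ac by (simp add: indep_sets2_eq)
    moreover have "prob (a \<inter> c) = prob a * prob c"
      using AD ac assms(4) by (auto simp: indep_sets2_eq)
    ultimately show "prob (b \<inter> e) = prob b * prob e"
      by (simp add: ac Int_ac)
  qed
  moreover have "Int_stable ?E"
  proof (rule Int_stableI)
    fix e e' assume "e \<in> ?E" "e' \<in> ?E"
    then obtain a c a' c' where "a \<in> A" "c \<in> C" "a' \<in> A" "c' \<in> C" "e = a \<inter> c" "e' = a' \<inter> c'"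
      by blast
    then show "e \<inter> e' \<in> ?E"
      by (intro CollectI exI[of _ "a \<inter> a'"] exI[of _ "c \<inter> c'"]) auto
  qed
  ultimately have "indep_set (sigma_sets (space M) B) (sigma_sets (space M) ?E)"
    by (intro indep_set_sigma_sets B.Int_stable)
  then show ?thesis by (simp add: B.sigma_sets_eq)
qed

lemma (in prob_space) indep_vars_reindex:
  assumes inj: "inj_on f I" and indep: "indep_vars M' X (f ` I)"
  shows "indep_vars (\<lambda>i. M' (f i)) (\<lambda>i. X (f i)) I"
  unfolding indep_vars_def2
proof safe
  fix i assume "i \<in> I"
  then show "random_variable (M' (f i)) (X (f i))"
    using indep by (auto simp: indep_vars_def2)
next
  have S: "indep_sets (\<lambda>k. {X k -` A \<inter> space M |A. A \<in> sets (M' k)}) (f ` I)"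
    using indep by (auto simp: indep_vars_def2)
  show "indep_sets (\<lambda>i. {X (f i) -` A \<inter> space M |A. A \<in> sets (M' (f i))}) I"
  proof (rule indep_setsI)
    fix i assume "i \<in> I"
    then show "{X (f i) -` A \<inter> space M |A. A \<in> sets (M' (f i))} \<subseteq> events"
      using S unfolding indep_sets_def by blast
  next
    fix J A assume J: "J \<noteq> {}" "J \<subseteq> I" "finite J"
      and A: "\<forall>j\<in>J. A j \<in> {X (f j) -` A \<inter> space M |A. A \<in> sets (M' (f j))}"
    define A' where "A' k = A (the_inv_into I f k)" for k
    have inv: "the_inv_into I f (f j) = j" if "j \<in> J" for j
      using inj J that by (meson subsetD the_inv_into_f_f)
    have "prob (\<Inter>k\<in>f ` J. A' k) = (\<Prod>k\<in>f ` J. prob (A' k))"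
      by (rule indep_setsD[OF S]) (use J A in \<open>auto simp: A'_def inv\<close>)
    moreover have "(\<Inter>k\<in>f ` J. A' k) = (\<Inter>j\<in>J. A j)"
      by (auto simp: A'_def inv)
    moreover have "(\<Prod>k\<in>f ` J. prob (A' k)) = (\<Prod>j\<in>J. prob (A j))"
      using inj J by (subst prod.reindex) (auto simp: A'_def inv intro: inj_on_subset)
    ultimately show "prob (\<Inter>j\<in>J. A j) = (\<Prod>j\<in>J. prob (A j))" by simp
  qed
qed

lemma sets_subset_sigma_Int:
  assumes "space A = \<Omega>" "space C = \<Omega>"
  shows "sets A \<subseteq> sets (sigma \<Omega> {a \<inter> c |a c. a \<in> sets A \<and> c \<in> sets C})"
    and "sets C \<subseteq> sets (sigma \<Omega> {a \<inter> c |a c. a \<in> sets A \<and> c \<in> sets C})"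
proof -
  let ?E = "{a \<inter> c |a c. a \<in> sets A \<and> c \<in> sets C}"
  have E: "?E \<subseteq> Pow \<Omega>"
    using sets.sets_into_space assms by blast
  show "sets A \<subseteq> sets (sigma \<Omega> ?E)"
  proof
    fix a assume a: "a \<in> sets A"
    have "a \<inter> \<Omega> \<in> sigma_sets \<Omega> ?E"
      using a sets.top[of C] assms by (intro sigma_sets.Basic) blast
    moreover have "a \<inter> \<Omega> = a"
      using sets.sets_into_space[OF a] assms by blast
    ultimately show "a \<in> sets (sigma \<Omega> ?E)" by (simp add: sets_measure_of[OF E])
  qed
  show "sets C \<subseteq> sets (sigma \<Omega> ?E)"
  proof
    fix c assume c: "c \<in> sets C"
    have "\<Omega> \<inter> c \<in> sigma_sets \<Omega> ?E"
      using c sets.top[of A] assms by (intro sigma_sets.Basic) blast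
    moreover have "\<Omega> \<inter> c = c"
      using sets.sets_into_space[OF c] assms by blast
    ultimately show "c \<in> sets (sigma \<Omega> ?E)" by (simp add: sets_measure_of[OF E])
  qed
qed

lemma (in prob_space) indep_restrict_join:
  fixes \<X> :: "'a measure" and Z :: "'i \<Rightarrow> 'a \<Rightarrow> 'b" and M' :: "'i \<Rightarrow> 'b measure"
  defines "V \<equiv> \<lambda>J. vimage_algebra (space M) (\<lambda>\<omega>. \<lambda>i\<in>J. Z i \<omega>) (\<Pi>\<^sub>M i\<in>J. M' i)"
  assumes Z: "indep_vars M' Z I" and AB: "A \<inter> B = {}" "A \<subseteq> I" "B \<subseteq> I"
    and X: "indep_set (sets \<X>) (sets (V I))" and space_X: "space \<X> = space M"
  shows "indep_set (sets (V A)) (sigma_sets (space M) {a \<inter> c |a c. a \<in> sets \<X> \<and> c \<in> sets (V B)})"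
proof -
  have sub: "sets (V J) \<subseteq> sets (V I)" if "J \<subseteq> I" for J
  proof -
    have "(\<lambda>\<omega>. \<lambda>i\<in>I. Z i \<omega>) \<in> measurable M (\<Pi>\<^sub>M i\<in>I. M' i)"
      using Z by (auto simp: indep_vars_def intro!: measurable_restrict)
    then have "(\<lambda>\<omega>. restrict (\<lambda>i\<in>I. Z i \<omega>) J) \<in> measurable (V I) (\<Pi>\<^sub>M i\<in>J. M' i)"
      unfolding V_def
      by (intro measurable_compose[OF measurable_vimage_algebra1 measurable_restrict_subset] that)
         (auto dest: measurable_space)
    then have "(\<lambda>\<omega>. \<lambda>i\<in>J. Z i \<omega>) \<in> measurable (V I) (\<Pi>\<^sub>M i\<in>J. M' i)"
      using that by (simp add: Int_absorb1 inf.absorb2)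
    from sets_vimage_algebra_subset[OF this] show ?thesis by (simp add: V_def)
  qed
  have indep_AB: "indep_set (sets (V A)) (sets (V B))"
    using indep_var_restrict[OF Z AB] by (simp add: indep_var_eq V_def sets_vimage_algebra)
  have sigma_V: "sigma_algebra (space M) (sets (V J))" for J
    using sets.sigma_algebra_axioms[of "V J"] by (simp add: V_def)
  have "sigma_algebra (space M) (sets \<X>)"
    using sets.sigma_algebra_axioms[of \<X>] by (simp add: space_X)
  then show ?thesis
    using AB by (intro indep_set_join[OF X indep_AB] sub sigma_V) auto
qed

lemma (in prob_space) indep_var_nn_integral_mult:
  fixes U V :: "'a \<Rightarrow> real"
  assumes indep: "indep_var borel U borel V" and V: "\<And>\<omega>. 0 \<le> V \<omega>"
  shows "(\<integral>\<^sup>+\<omega>. ennreal (U \<omega> * V \<omega>) \<partial>M) = (\<integral>\<^sup>+\<omega>. U \<omega> \<partial>M) * (\<integral>\<^sup>+\<omega>. V \<omega> \<partial>M)"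
proof -
  have borel: "(\<lambda>_. borel) = case_bool borel borel"
    by (rule ext) (simp split: bool.split)
  have "indep_vars (\<lambda>_. borel) (case_bool U V) UNIV"
    using indep unfolding indep_var_def borel .
  then have "indep_vars (\<lambda>_. borel) (\<lambda>i \<omega>. ennreal (case_bool U V i \<omega>)) UNIV"
    by (rule indep_vars_compose2) auto
  then have "(\<integral>\<^sup>+\<omega>. (\<Prod>i\<in>UNIV. ennreal (case_bool U V i \<omega>)) \<partial>M) =
      (\<Prod>i\<in>UNIV. \<integral>\<^sup>+\<omega>. ennreal (case_bool U V i \<omega>) \<partial>M)"
    by (intro indep_vars_nn_integral) auto
  then show ?thesis
    using V by (simp add: UNIV_bool mult.commute ennreal_mult'')
qed

lemma (in prob_space) distributed_AE_nonneg:
  fixes X :: "'a \<Rightarrow> real"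
  assumes D: "distributed M lborel X f" and f: "\<And>t. t < 0 \<Longrightarrow> f t = 0"
  shows "AE \<omega> in M. 0 \<le> X \<omega>"
proof -
  have "AE t in lborel. 0 < f t \<longrightarrow> 0 \<le> t"
    using f by (intro AE_I2) (metis less_irrefl not_le)
  then show ?thesis
    by (subst distributed_AE2[OF D]) auto
qed

lemma (in sigma_finite_measure) nn_integral_tail:
  fixes X :: "'a \<Rightarrow> real"
  assumes [measurable]: "X \<in> borel_measurable M" and nonneg: "AE \<omega> in M. 0 \<le> X \<omega>"
  shows "(\<integral>\<^sup>+\<omega>. ennreal (X \<omega>) \<partial>M) =
    (\<integral>\<^sup>+t. emeasure M {\<omega> \<in> space M. t < X \<omega>} * indicator {0..} t \<partial>lborel)"
proof -
  define F where "F \<omega> t = (if 0 \<le> t \<and> t < X \<omega> then 1 else 0 :: ennreal)" for \<omega> t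
  interpret pair_sigma_finite M lborel ..
  have F_measurable: "case_prod F \<in> borel_measurable (M \<Otimes>\<^sub>M lborel)"
    unfolding F_def case_prod_beta by measurable
  have "(\<integral>\<^sup>+t. F \<omega> t \<partial>lborel) = ennreal (X \<omega>)" if "0 \<le> X \<omega>" for \<omega>
  proof -
    have "(\<integral>\<^sup>+t. F \<omega> t \<partial>lborel) = (\<integral>\<^sup>+t. indicator {0..<X \<omega>} t \<partial>lborel)"
      by (intro nn_integral_cong) (auto simp: F_def)
    then show ?thesis using that by simp
  qed
  then have "(\<integral>\<^sup>+\<omega>. ennreal (X \<omega>) \<partial>M) = (\<integral>\<^sup>+\<omega>. (\<integral>\<^sup>+t. F \<omega> t \<partial>lborel) \<partial>M)"
    using nonneg by (intro nn_integral_cong_AE) (auto elim!: AE_mp)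
  also have "\<dots> = (\<integral>\<^sup>+t. (\<integral>\<^sup>+\<omega>. F \<omega> t \<partial>M) \<partial>lborel)"
    by (rule Fubini'[OF F_measurable, symmetric])
  also have "\<dots> = (\<integral>\<^sup>+t. emeasure M {\<omega> \<in> space M. t < X \<omega>} * indicator {0..} t \<partial>lborel)"
  proof (rule nn_integral_cong)
    fix t :: real
    have "(\<integral>\<^sup>+\<omega>. F \<omega> t \<partial>M) = (\<integral>\<^sup>+\<omega>. indicator {\<omega> \<in> space M. t < X \<omega>} \<omega> * indicator {0..} t \<partial>M)"
      by (intro nn_integral_cong) (auto simp: F_def indicator_def)
    also have "\<dots> = emeasure M {\<omega> \<in> space M. t < X \<omega>} * indicator {0..} t"
      by (simp add: nn_integral_multc)
    finally show "(\<integral>\<^sup>+\<omega>. F \<omega> t \<partial>M) = emeasure M {\<omega> \<in> space M. t < X \<omega>} * indicator {0..} t" .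
  qed
  finally show ?thesis .
qed

section \<open>Gamma and exponential variables\<close>

lemma nn_integral_powr_exp:
  fixes k :: real
  assumes k: "0 < k"
  shows "(\<integral>\<^sup>+t. ennreal (indicator {0..} t * t powr k / exp (k * t)) \<partial>lborel) =
    ennreal (Gamma (k + 1) / k powr (k + 1))"
proof -
  have "(\<integral>\<^sup>+t. ennreal (indicator {0..} t * t powr k / exp (k * t)) \<partial>lborel) =
      ennreal \<bar>1/k\<bar> * (\<integral>\<^sup>+t. ennreal (indicator {0..} (0 + 1/k * t) * (0 + 1/k * t) powr k
        / exp (k * (0 + 1/k * t))) \<partial>lborel)"
    by (rule nn_integral_real_affine) (use k in auto)
  also have "(\<integral>\<^sup>+t. ennreal (indicator {0..} (0 + 1/k * t) * (0 + 1/k * t) powr k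
        / exp (k * (0 + 1/k * t))) \<partial>lborel) =
      (\<integral>\<^sup>+t. ennreal (k powr (- k)) * ennreal (indicator {0..} t * t powr (k + 1 - 1) / exp t) \<partial>lborel)"
  proof (rule nn_integral_cong)
    fix t :: real
    show "ennreal (indicator {0..} (0 + 1/k * t) * (0 + 1/k * t) powr k / exp (k * (0 + 1/k * t))) =
        ennreal (k powr (- k)) * ennreal (indicator {0..} t * t powr (k + 1 - 1) / exp t)"
    proof (cases "0 \<le> t")
      case True
      have "(t / k) powr k = k powr (- k) * t powr k"
        using True k by (subst powr_divide) (auto simp: powr_minus_divide)
      then show ?thesis
        using True k by (simp add: ennreal_mult[symmetric] indicator_def)
    qed (use k in \<open>simp add: indicator_def zero_le_divide_iff\<close>)
  qed
  also have "\<dots> = ennreal (k powr (- k)) * ennreal (Gamma (k + 1))"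
    using Gamma_conv_nn_integral_real[of "k + 1"] k by (subst nn_integral_cmult) simp_all
  also have "ennreal \<bar>1/k\<bar> * (ennreal (k powr (- k)) * ennreal (Gamma (k + 1))) =
      ennreal (Gamma (k + 1) / k powr (k + 1))"
    using k by (simp add: ennreal_mult'[symmetric] powr_add powr_minus field_simps)
  finally show ?thesis .
qed

lemma nn_integral_gamma_density_mean:
  fixes k :: real
  assumes k: "0 < k"
  shows "(\<integral>\<^sup>+t. ennreal (gamma_density k (1/k) t) * ennreal t \<partial>lborel) = 1"
proof -
  define C where "C = k powr k / Gamma k"
  have C: "0 \<le> C" unfolding C_def using k by (simp add: less_imp_le)
  have "(\<integral>\<^sup>+t. ennreal (gamma_density k (1/k) t) * ennreal t \<partial>lborel) =
      (\<integral>\<^sup>+t. ennreal C * ennreal (indicator {0..} t * t powr k / exp (k * t)) \<partial>lborel)"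
  proof (rule nn_integral_cong)
    fix t :: real
    show "ennreal (gamma_density k (1/k) t) * ennreal t =
        ennreal C * ennreal (indicator {0..} t * t powr k / exp (k * t))"
    proof (cases "0 < t")
      case True
      have "gamma_density k (1/k) t * t = C * (t powr k / exp (k * t))"
        using True k unfolding gamma_density_def C_def
        by (simp add: powr_divide powr_diff exp_minus field_simps powr_minus)
      then show ?thesis
        using True C by (simp add: ennreal_mult''[symmetric] ennreal_mult[symmetric])
    qed (use k in \<open>cases "t = 0"; auto simp: gamma_density_def indicator_def\<close>)
  qed
  also have "\<dots> = ennreal C * ennreal (Gamma (k + 1) / k powr (k + 1))"
    by (simp add: nn_integral_cmult nn_integral_powr_exp[OF k])
  also have "\<dots> = 1"
  proof -
    have "Gamma (k + 1) = k * Gamma k"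
      by (rule Gamma_plus1) (use k in \<open>auto elim!: nonpos_Ints_cases\<close>)
    moreover have "Gamma k \<noteq> 0" using Gamma_real_pos[OF k] by linarith
    ultimately show ?thesis
      using k C by (simp add: ennreal_mult[symmetric] C_def powr_add field_simps)
  qed
  finally show ?thesis .
qed

lemma (in prob_space) gamma_distributed_nn_integral:
  fixes k :: real
  assumes "0 < k" and D: "distributed M lborel X (\<lambda>t. ennreal (gamma_density k (1/k) t))"
  shows "(\<integral>\<^sup>+\<omega>. ennreal (X \<omega>) \<partial>M) = 1"
  using distributed_nn_integral[OF D, of ennreal] nn_integral_gamma_density_mean[OF assms(1)]
  by simp

lemma (in prob_space) gamma_distributed_AE_nonneg:
  assumes "distributed M lborel X (\<lambda>t. ennreal (gamma_density k \<theta> t))"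
  shows "AE \<omega> in M. 0 \<le> X \<omega>"
  by (rule distributed_AE_nonneg[OF assms]) (simp add: gamma_density_def)

lemma (in prob_space) gamma_distributed_exponential:
  assumes "distributed M lborel X (\<lambda>t. ennreal (gamma_density 1 1 t))"
  shows "distributed M lborel X (exponential_density 1)"
proof -
  have "AE t in lborel. ennreal (gamma_density 1 1 t) = ennreal (exponential_density 1 t)"
    using AE_lborel_singleton[of 0]
    by eventually_elim (auto simp: gamma_density_def exponential_density_def)
  then show ?thesis
    using assms by (subst (asm) distributed_cong_density) (auto simp: gamma_density_def)
qed

lemma nn_integral_one_minus_power_exp:
  "(\<integral>\<^sup>+t. ennreal (1 - (1 - exp (- t)) ^ N) * indicator {0..} t \<partial>lborel) =
    ennreal (\<Sum>n=1..N. 1 / real n)"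
proof -
  define F where "F t = (\<Sum>j=1..N. (1 - exp (- t)) ^ j / real j)" for t :: real
  have "(\<integral>\<^sup>+t. ennreal (1 - (1 - exp (- t)) ^ N) * indicator {0..} t \<partial>lborel) =
      (\<Sum>n=1..N. 1 / real n) - F 0"
  proof (rule nn_integral_FTC_atLeast)
    fix t :: real assume t: "0 \<le> t"
    have "((\<lambda>t. (1 - exp (- t)) ^ j / real j) has_real_derivative (1 - exp (- t)) ^ (j - 1) * exp (- t)) (at t)"
      if "j \<in> {1..N}" for j
    proof -
      have "((\<lambda>t. 1 - exp (- t)) has_real_derivative exp (- t)) (at t)"
        by (auto intro!: derivative_eq_intros)
      from DERIV_cdivide[OF DERIV_power[OF this, where n = j], where c = "real j"] that show ?thesis
        by (simp add: mult.commute)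
    qed
    then have "(F has_real_derivative (\<Sum>j=1..N. (1 - exp (- t)) ^ (j - 1) * exp (- t))) (at t)"
      unfolding F_def by (rule DERIV_sum)
    moreover have "(\<Sum>j=1..n. (1 - exp (- t)) ^ (j - 1) * exp (- t)) = 1 - (1 - exp (- t)) ^ n" for n
      by (induction n) (simp_all add: algebra_simps)
    ultimately show "(F has_real_derivative 1 - (1 - exp (- t)) ^ N) (at t)"
      by simp
    have "(1 - exp (- t)) ^ N \<le> 1"
      using t by (intro power_le_one) auto
    then show "0 \<le> 1 - (1 - exp (- t)) ^ N" by simp
  next
    have "((\<lambda>t::real. exp (- t)) \<longlongrightarrow> 0) at_top"
      by (simp add: exp_at_top exp_minus tendsto_inverse_0_at_top)
    then have "((\<lambda>t. (1 - exp (- t)) ^ j / real j) \<longlongrightarrow> (1 - 0) ^ j / real j) at_top"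
      if "j \<in> {1..N}" for j
      using that by (intro tendsto_intros) auto
    then show "(F \<longlongrightarrow> (\<Sum>n=1..N. 1 / real n)) at_top"
      unfolding F_def by (auto intro!: tendsto_sum)
  qed measurable
  moreover have "F 0 = 0" unfolding F_def by (intro sum.neutral) auto
  ultimately show ?thesis by simp
qed

lemma (in prob_space) AE_Max_nonneg:
  assumes "finite I" "i \<in> I" and "AE \<omega> in M. 0 \<le> X i \<omega>"
  shows "AE \<omega> in M. 0 \<le> Max ((\<lambda>i. X i \<omega>) ` I)"
  using assms(3) by eventually_elim (use assms(1,2) in \<open>auto intro: order_trans[OF _ Max_ge]\<close>)

lemma (in prob_space) emeasure_Max_exponential_greater:
  assumes I: "finite I" "I \<noteq> {}" and indep: "indep_vars (\<lambda>_. borel) X I"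
    and exp: "\<And>i. i \<in> I \<Longrightarrow> distributed M lborel (X i) (exponential_density 1)" and t: "0 \<le> t"
  shows "emeasure M {\<omega> \<in> space M. t < Max ((\<lambda>i. X i \<omega>) ` I)} = ennreal (1 - (1 - exp (- t)) ^ card I)"
proof -
  have "{\<omega> \<in> space M. Max ((\<lambda>i. X i \<omega>) ` I) \<le> t} = (\<Inter>i\<in>I. X i -` {..t} \<inter> space M)"
    using I by auto
  then have "prob {\<omega> \<in> space M. Max ((\<lambda>i. X i \<omega>) ` I) \<le> t} = (\<Prod>i\<in>I. prob (X i -` {..t} \<inter> space M))"
    using indep_varsD[OF indep I(2,1)] by auto
  also have "\<dots> = (\<Prod>i\<in>I. 1 - exp (- t))"
  proof (rule prod.cong[OF refl])
    fix i assume "i \<in> I"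
    have "X i -` {..t} \<inter> space M = {\<omega> \<in> space M. X i \<omega> \<le> t}" by auto
    then show "prob (X i -` {..t} \<inter> space M) = 1 - exp (- t)"
      using exponential_distributedD_le[OF exp[OF \<open>i \<in> I\<close>] t] by simp
  qed
  moreover have "{\<omega> \<in> space M. t < Max ((\<lambda>i. X i \<omega>) ` I)} =
      space M - {\<omega> \<in> space M. Max ((\<lambda>i. X i \<omega>) ` I) \<le> t}"
    by auto
  moreover have "X i \<in> borel_measurable M" if "i \<in> I" for i
    using distributed_measurable[OF exp[OF that]] by simp
  ultimately have "prob {\<omega> \<in> space M. t < Max ((\<lambda>i. X i \<omega>) ` I)} = 1 - (1 - exp (- t)) ^ card I"
    using I by (simp add: prob_compl borel_measurable_Max)
  then show ?thesis by (simp add: emeasure_eq_measure)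
qed

lemma (in prob_space) nn_integral_Max_exponential:
  assumes I: "finite I" "I \<noteq> {}" and indep: "indep_vars (\<lambda>_. borel) X I"
    and exp: "\<And>i. i \<in> I \<Longrightarrow> distributed M lborel (X i) (exponential_density 1)"
  shows "(\<integral>\<^sup>+\<omega>. ennreal (Max ((\<lambda>i. X i \<omega>) ` I)) \<partial>M) = ennreal (\<Sum>n=1..card I. 1 / real n)"
proof -
  have "X i \<in> borel_measurable M" if "i \<in> I" for i
    using distributed_measurable[OF exp[OF that]] by simp
  then have "(\<lambda>\<omega>. Max ((\<lambda>i. X i \<omega>) ` I)) \<in> borel_measurable M"
    using I by (intro borel_measurable_Max) auto
  moreover obtain i where "i \<in> I" using I by blast
  moreover have "AE \<omega> in M. 0 \<le> X i \<omega>" if "i \<in> I" for i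
    by (rule distributed_AE_nonneg[OF exp[OF that]]) (simp add: exponential_density_def)
  ultimately have "(\<integral>\<^sup>+\<omega>. ennreal (Max ((\<lambda>i. X i \<omega>) ` I)) \<partial>M) =
      (\<integral>\<^sup>+t. ennreal (1 - (1 - exp (- t)) ^ card I) * indicator {0..} t \<partial>lborel)"
    using AE_Max_nonneg[where X = X, OF I(1)] emeasure_Max_exponential_greater[OF assms]
    by (subst nn_integral_tail) (auto intro!: nn_integral_cong simp: indicator_def)
  then show ?thesis by (simp add: nn_integral_one_minus_power_exp)
qed

lemma (in prob_space) integral_Max_exponential:
  assumes I: "finite I" "I \<noteq> {}" and indep: "indep_vars (\<lambda>_. borel) X I"
    and exp: "\<And>i. i \<in> I \<Longrightarrow> distributed M lborel (X i) (exponential_density 1)"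
  shows "(\<integral>\<omega>. Max ((\<lambda>i. X i \<omega>) ` I) \<partial>M) = (\<Sum>n=1..card I. 1 / real n)"
proof -
  obtain i where "i \<in> I" using I by blast
  have "AE \<omega> in M. 0 \<le> X i \<omega>"
    by (rule distributed_AE_nonneg[OF exp[OF \<open>i \<in> I\<close>]]) (simp add: exponential_density_def)
  moreover have "X i \<in> borel_measurable M" if "i \<in> I" for i
    using distributed_measurable[OF exp[OF that]] by simp
  ultimately show ?thesis
    using AE_Max_nonneg[where X = X, OF I(1) \<open>i \<in> I\<close>] nn_integral_Max_exponential[OF assms] I
    by (subst integral_eq_nn_integral) (auto intro!: borel_measurable_Max simp: sum_nonneg)
qed

section \<open>Sharing the maximum of an i.i.d.\ family\<close>

lemma Max_image_nonneg:
  fixes f :: "'i \<Rightarrow> 'a::{linorder, zero}"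
  assumes "finite I" "i \<in> I" "0 \<le> f i"
  shows "0 \<le> Max (f ` I)"
  using assms by (auto intro: order_trans[OF _ Max_ge])

definition max_share :: "'i set \<Rightarrow> ('i \<Rightarrow> real) \<Rightarrow> 'i \<Rightarrow> real" where
  "max_share I v k =
     of_bool (v k = Max (v ` I)) * Max (v ` I) / (\<Sum>j\<in>I. of_bool (v j = Max (v ` I)))"

lemma card_Max_attained_pos:
  assumes "finite I" "I \<noteq> {}"
  shows "0 < (\<Sum>j\<in>I. of_bool (v j = Max (v ` I)) :: real)"
proof -
  have "Max (v ` I) \<in> v ` I"
    using assms by (intro Max_in) auto
  then obtain j where "j \<in> I" "v j = Max (v ` I)"
    by auto
  then show ?thesis
    using assms by (intro sum_pos2[of _ j]) auto
qed

lemma sum_max_share: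
  assumes "finite I" "I \<noteq> {}"
  shows "(\<Sum>k\<in>I. max_share I v k) = Max (v ` I)"
  using card_Max_attained_pos[OF assms, of v]
  by (simp add: max_share_def sum_divide_distrib[symmetric] sum_distrib_right[symmetric])

lemma max_share_nonneg:
  assumes "finite I" "I \<noteq> {}" "\<And>i. i \<in> I \<Longrightarrow> 0 \<le> v i"
  shows "0 \<le> max_share I v k"
proof -
  obtain i where "i \<in> I" using assms by blast
  then have "0 \<le> Max (v ` I)"
    using assms by (intro Max_image_nonneg) auto
  then show ?thesis
    unfolding max_share_def by (intro divide_nonneg_nonneg sum_nonneg) auto
qed

lemma sum_max_share_mult_le:
  assumes "finite I" "I \<noteq> {}" and y: "\<And>k. k \<in> I \<Longrightarrow> 0 \<le> y k"
  shows "(\<Sum>k\<in>I. max_share I v k * y k) \<le> Max ((\<lambda>k. v k * y k) ` I)"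
proof -
  define n where "n = (\<Sum>j\<in>I. of_bool (v j = Max (v ` I)) :: real)"
  have n: "0 < n" unfolding n_def by (rule card_Max_attained_pos[OF assms(1,2)])
  have "max_share I v k * y k \<le> of_bool (v k = Max (v ` I)) / n * Max ((\<lambda>k. v k * y k) ` I)"
    if "k \<in> I" for k
  proof (cases "v k = Max (v ` I)")
    case True
    then have "max_share I v k * y k = (v k * y k) / n"
      by (simp add: max_share_def n_def)
    also have "\<dots> \<le> Max ((\<lambda>k. v k * y k) ` I) / n"
      using that assms n by (intro divide_right_mono Max_ge) auto
    finally show ?thesis using True by simp
  qed (simp add: max_share_def)
  then have "(\<Sum>k\<in>I. max_share I v k * y k) \<le>
      (\<Sum>k\<in>I. of_bool (v k = Max (v ` I)) / n * Max ((\<lambda>k. v k * y k) ` I))"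
    by (rule sum_mono)
  also have "\<dots> = Max ((\<lambda>k. v k * y k) ` I)"
    using n by (simp add: n_def sum_distrib_right[symmetric] sum_divide_distrib[symmetric])
  finally show ?thesis .
qed

lemma max_share_cong:
  "(\<And>i. i \<in> I \<Longrightarrow> v i = w i) \<Longrightarrow> k \<in> I \<Longrightarrow> max_share I v k = max_share I w k"
  unfolding max_share_def by (simp cong: image_cong sum.cong)

lemma max_share_bij:
  assumes \<tau>: "bij_betw \<tau> I I" and "k \<in> I"
  shows "max_share I (\<lambda>i. v (\<tau> i)) k = max_share I v (\<tau> k)"
proof -
  have "(\<lambda>i. v (\<tau> i)) ` I = v ` I"
    using \<tau> by (simp add: bij_betw_def image_image[symmetric])
  moreover have "(\<Sum>j\<in>I. of_bool (v (\<tau> j) = Max (v ` I)) :: real) = (\<Sum>j\<in>I. of_bool (v j = Max (v ` I)))"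
    using sum.reindex_bij_betw[OF \<tau>, of "\<lambda>j. of_bool (v j = Max (v ` I))"] by simp
  ultimately show ?thesis by (simp add: max_share_def)
qed

lemma measurable_max_share [measurable]:
  assumes "finite I" "k \<in> I"
  shows "(\<lambda>v. max_share I v k) \<in> borel_measurable (\<Pi>\<^sub>M i\<in>I. borel)"
proof -
  have [measurable]: "(\<lambda>v. v i) \<in> borel_measurable (\<Pi>\<^sub>M i\<in>I. (borel :: real measure))"
    if "i \<in> I" for i
    using that by measurable
  have [measurable]: "(\<lambda>v. Max (v ` I)) \<in> borel_measurable (\<Pi>\<^sub>M i\<in>I. (borel :: real measure))"
    using borel_measurable_Max[of I "\<lambda>i v. v i" "\<Pi>\<^sub>M i\<in>I. (borel :: real measure)"] assms by simp
  show ?thesis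
    unfolding max_share_def of_bool_def using assms by measurable
qed

lemma enn2real_ratio_le:
  fixes S B G :: ennreal and \<mu> :: real
  assumes le: "G * S \<le> of_nat n * B" and \<mu>: "0 < \<mu>" "ennreal \<mu> \<le> G" and G: "G \<noteq> \<top>"
  shows "enn2real (ennreal \<mu> * S) / enn2real B \<le> real n * \<mu> / enn2real G"
proof (cases "S = 0 \<or> S = \<top> \<or> B = \<top>")
  case True
  \<comment> \<open>The left-hand side is then \<open>0\<close>, by \<open>enn2real \<top> = 0\<close> and \<open>x / 0 = 0\<close>.\<close>
  then show ?thesis
    using \<mu> by (auto simp: ennreal_mult_top)
next
  case False
  define s b g where "s = enn2real S" and "b = enn2real B" and "g = enn2real G"
  have S: "S = ennreal s" "0 < s" and B: "B = ennreal b" "0 \<le> b"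
    using False by (auto simp: s_def b_def enn2real_positive_iff less_top zero_less_iff_neq_zero)
  have g: "G = ennreal g" "\<mu> \<le> g"
    using G \<mu>(2) by (auto simp: g_def enn2real_leI less_top ennreal_le_iff[symmetric] simp del: ennreal_le_iff)
  have "0 \<le> g" using g(2) \<mu>(1) by simp
  then have "ennreal (g * s) \<le> ennreal (real n * b)"
    using le g(1) S B by (simp add: ennreal_mult[symmetric] ennreal_of_nat_eq_real_of_nat)
  then have gs: "g * s \<le> real n * b"
    using B by (simp add: ennreal_le_iff)
  moreover have "0 < g * s" using g(2) \<mu>(1) S(2) by simp
  ultimately have "0 < b"
    using B(2) by (cases "b = 0") auto
  have "\<mu> * s * g \<le> \<mu> * (real n * b)"
    using mult_left_mono[OF gs, of \<mu>] \<mu>(1) by (simp add: mult_ac)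
  then show ?thesis
    using S B g \<mu> \<open>0 < b\<close> by (simp add: ennreal_mult[symmetric] divide_simps mult_ac)
qed

locale iid_nonneg = prob_space M for M :: "'a measure" +
  fixes I :: "'i set" and G :: "'i \<Rightarrow> 'a \<Rightarrow> real" and D :: "real measure"
  assumes finite_index: "finite I" and nonempty_index: "I \<noteq> {}"
    and indep: "indep_vars (\<lambda>_. borel) G I"
    and distr_eq: "\<And>i. i \<in> I \<Longrightarrow> distr M borel (G i) = D"
    and nonneg: "AE \<omega> in M. \<forall>i\<in>I. 0 \<le> G i \<omega>"
begin

lemma measurable_G [measurable]: "i \<in> I \<Longrightarrow> G i \<in> borel_measurable M"
  using indep by (simp add: indep_vars_def)

lemma measurable_G_vector [measurable]:
  "(\<lambda>\<omega>. \<lambda>i\<in>I. G i \<omega>) \<in> measurable M (\<Pi>\<^sub>M i\<in>I. borel)"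
  by (intro measurable_restrict measurable_G)

lemma measurable_max_share_G [measurable]:
  assumes "k \<in> I"
  shows "(\<lambda>\<omega>. max_share I (\<lambda>i. G i \<omega>) k) \<in> borel_measurable M"
proof -
  have "(\<lambda>\<omega>. max_share I (\<lambda>i\<in>I. G i \<omega>) k) \<in> borel_measurable M"
    using assms finite_index by measurable
  moreover have "max_share I (\<lambda>i\<in>I. G i \<omega>) k = max_share I (\<lambda>i. G i \<omega>) k" for \<omega>
    using assms by (intro max_share_cong) auto
  ultimately show ?thesis by simp
qed

lemma distr_G_vector: "distr M (\<Pi>\<^sub>M i\<in>I. borel) (\<lambda>\<omega>. \<lambda>i\<in>I. G i \<omega>) = (\<Pi>\<^sub>M i\<in>I. D)"
proof -
  define G' where "G' i = (if i \<in> I then G i else (\<lambda>_. 0))" for i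
  have rv: "random_variable borel (G' i)" for i
    by (simp add: G'_def)
  have "indep_vars (\<lambda>_. borel) G' I"
    using indep by (rule indep_vars_cong[THEN iffD1, rotated 3]) (auto simp: G'_def)
  then have "distr M (\<Pi>\<^sub>M i\<in>I. borel) (\<lambda>\<omega>. \<lambda>i\<in>I. G' i \<omega>) = (\<Pi>\<^sub>M i\<in>I. distr M borel (G' i))"
    using indep_vars_iff_distr_eq_PiM[OF nonempty_index rv] by simp
  moreover have "(\<lambda>\<omega>. \<lambda>i\<in>I. G' i \<omega>) = (\<lambda>\<omega>. \<lambda>i\<in>I. G i \<omega>)"
    by (intro ext restrict_ext) (simp add: G'_def)
  moreover have "(\<Pi>\<^sub>M i\<in>I. distr M borel (G' i)) = (\<Pi>\<^sub>M i\<in>I. D)"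
    by (rule PiM_cong) (auto simp: G'_def distr_eq)
  ultimately show ?thesis by simp
qed

lemma iid_nonneg_permute:
  assumes \<tau>: "bij_betw \<tau> I I"
  shows "iid_nonneg M I (\<lambda>i. G (\<tau> i)) D"
proof
  show "indep_vars (\<lambda>_. borel) (\<lambda>i. G (\<tau> i)) I"
    using indep_vars_reindex[of \<tau> I "\<lambda>_. borel" G] \<tau> indep by (simp add: bij_betw_def)
  show "AE \<omega> in M. \<forall>i\<in>I. 0 \<le> G (\<tau> i) \<omega>"
    using nonneg by eventually_elim (use \<tau> in \<open>auto simp: bij_betw_def\<close>)
qed (use \<tau> distr_eq finite_index nonempty_index in \<open>auto simp: bij_betw_def\<close>)

lemma nn_integral_permute:
  assumes \<tau>: "bij_betw \<tau> I I" and [measurable]: "F \<in> borel_measurable (\<Pi>\<^sub>M i\<in>I. borel)"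
  shows "(\<integral>\<^sup>+\<omega>. F (\<lambda>i\<in>I. G (\<tau> i) \<omega>) \<partial>M) = (\<integral>\<^sup>+\<omega>. F (\<lambda>i\<in>I. G i \<omega>) \<partial>M)"
proof -
  interpret P: iid_nonneg M I "\<lambda>i. G (\<tau> i)" D by (rule iid_nonneg_permute[OF \<tau>])
  have "(\<integral>\<^sup>+\<omega>. F (\<lambda>i\<in>I. G (\<tau> i) \<omega>) \<partial>M) = (\<integral>\<^sup>+v. F v \<partial>(\<Pi>\<^sub>M i\<in>I. D))"
    by (simp add: P.distr_G_vector[symmetric] nn_integral_distr)
  also have "\<dots> = (\<integral>\<^sup>+\<omega>. F (\<lambda>i\<in>I. G i \<omega>) \<partial>M)"
    by (simp add: distr_G_vector[symmetric] nn_integral_distr)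
  finally show ?thesis .
qed

lemma nn_integral_G_eq:
  assumes "i \<in> I" "j \<in> I"
  shows "(\<integral>\<^sup>+\<omega>. ennreal (G i \<omega>) \<partial>M) = (\<integral>\<^sup>+\<omega>. ennreal (G j \<omega>) \<partial>M)"
proof -
  have "(\<integral>\<^sup>+\<omega>. ennreal (G i \<omega>) \<partial>M) = (\<integral>\<^sup>+t. ennreal t \<partial>D)" if "i \<in> I" for i
    using that by (simp add: distr_eq[symmetric] nn_integral_distr)
  then show ?thesis using assms by simp
qed

lemma nn_integral_max_share_eq:
  assumes "k \<in> I" "j \<in> I"
  shows "(\<integral>\<^sup>+\<omega>. max_share I (\<lambda>i. G i \<omega>) k \<partial>M) = (\<integral>\<^sup>+\<omega>. max_share I (\<lambda>i. G i \<omega>) j \<partial>M)"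
proof -
  have "max_share I (\<lambda>i\<in>I. G (Transposition.transpose j k i) \<omega>) j = max_share I (\<lambda>i. G i \<omega>) k" for \<omega>
    using max_share_bij[of "Transposition.transpose j k" I j "\<lambda>i. G i \<omega>"] assms
    by (simp add: max_share_cong[of I "\<lambda>i\<in>I. G (Transposition.transpose j k i) \<omega>"
        "\<lambda>i. G (Transposition.transpose j k i) \<omega>"])
  moreover have "max_share I (\<lambda>i\<in>I. G i \<omega>) j = max_share I (\<lambda>i. G i \<omega>) j" for \<omega>
    using assms by (intro max_share_cong) auto
  ultimately show ?thesis
    using nn_integral_permute[of "Transposition.transpose j k" "\<lambda>v. ennreal (max_share I v j)"] assms
    by (simp add: finite_index)
qed

lemma card_mult_nn_integral_max_share:
  assumes "k \<in> I"
  shows "of_nat (card I) * (\<integral>\<^sup>+\<omega>. max_share I (\<lambda>i. G i \<omega>) k \<partial>M) =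
    (\<integral>\<^sup>+\<omega>. Max ((\<lambda>i. G i \<omega>) ` I) \<partial>M)"
proof -
  have "of_nat (card I) * (\<integral>\<^sup>+\<omega>. max_share I (\<lambda>i. G i \<omega>) k \<partial>M) =
      (\<Sum>j\<in>I. \<integral>\<^sup>+\<omega>. max_share I (\<lambda>i. G i \<omega>) j \<partial>M)"
    using nn_integral_max_share_eq[OF _ assms] by (simp cong: sum.cong)
  also have "\<dots> = (\<integral>\<^sup>+\<omega>. (\<Sum>j\<in>I. ennreal (max_share I (\<lambda>i. G i \<omega>) j)) \<partial>M)"
    using finite_index by (intro nn_integral_sum[symmetric]) auto
  also have "\<dots> = (\<integral>\<^sup>+\<omega>. Max ((\<lambda>i. G i \<omega>) ` I) \<partial>M)"
    using nonneg
    by (intro nn_integral_cong_AE, eventually_elim)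
       (simp add: sum_ennreal max_share_nonneg finite_index nonempty_index sum_max_share)
  finally show ?thesis .
qed

lemma nn_integral_max_share_mult_indep:
  assumes V_nonneg: "\<And>\<omega>. 0 \<le> V \<omega>"
    and V_indep: "\<And>F. F \<in> borel_measurable (\<Pi>\<^sub>M i\<in>I. borel) \<Longrightarrow>
        indep_var borel (\<lambda>\<omega>. F (\<lambda>i\<in>I. G i \<omega>)) borel V"
    and "k \<in> I" "j \<in> I"
  shows "(\<integral>\<^sup>+\<omega>. ennreal (max_share I (\<lambda>i. G i \<omega>) k * V \<omega>) \<partial>M) =
    (\<integral>\<^sup>+\<omega>. max_share I (\<lambda>i. G i \<omega>) j \<partial>M) * (\<integral>\<^sup>+\<omega>. V \<omega> \<partial>M)"
proof -
  have "indep_var borel (\<lambda>\<omega>. max_share I (\<lambda>i\<in>I. G i \<omega>) k) borel V"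
    using assms finite_index by (intro V_indep) auto
  moreover have "max_share I (\<lambda>i\<in>I. G i \<omega>) k = max_share I (\<lambda>i. G i \<omega>) k" for \<omega>
    using assms by (intro max_share_cong) auto
  ultimately show ?thesis
    using nn_integral_max_share_eq[OF assms(3,4)] by (simp add: indep_var_nn_integral_mult V_nonneg)
qed

lemma nn_integral_sum_max_share_mult_le:
  assumes V_nonneg: "\<And>k \<omega>. 0 \<le> V k \<omega>"
  shows "(\<integral>\<^sup>+\<omega>. (\<Sum>k\<in>I. ennreal (max_share I (\<lambda>i. G i \<omega>) k * V k \<omega>)) \<partial>M) \<le>
    (\<integral>\<^sup>+\<omega>. Max ((\<lambda>k. G k \<omega> * V k \<omega>) ` I) \<partial>M)"
  using nonneg
proof (intro nn_integral_mono_AE, eventually_elim)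
  case (elim \<omega>)
  then have "(\<Sum>k\<in>I. ennreal (max_share I (\<lambda>i. G i \<omega>) k * V k \<omega>)) =
      ennreal (\<Sum>k\<in>I. max_share I (\<lambda>i. G i \<omega>) k * V k \<omega>)"
    by (simp add: sum_ennreal max_share_nonneg finite_index nonempty_index V_nonneg)
  also have "\<dots> \<le> ennreal (Max ((\<lambda>k. G k \<omega> * V k \<omega>) ` I))"
    by (intro ennreal_leI sum_max_share_mult_le finite_index nonempty_index V_nonneg)
  finally show ?case .
qed

text \<open>Route the whole of \<open>max G\<close> to the indices attaining it; each share is independent of
  \<open>V\<^sub>k\<close> and, by exchangeability, has mean \<open>E[max G] / |I|\<close>.\<close>
lemma nn_integral_Max_mult_indep_ge:
  assumes V_nonneg: "\<And>k \<omega>. 0 \<le> V k \<omega>" and [measurable]: "\<And>k. k \<in> I \<Longrightarrow> V k \<in> borel_measurable M"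
    and V_indep: "\<And>k F. k \<in> I \<Longrightarrow> F \<in> borel_measurable (\<Pi>\<^sub>M i\<in>I. borel) \<Longrightarrow>
        indep_var borel (\<lambda>\<omega>. F (\<lambda>i\<in>I. G i \<omega>)) borel (V k)"
  shows "(\<integral>\<^sup>+\<omega>. Max ((\<lambda>i. G i \<omega>) ` I) \<partial>M) * (\<Sum>k\<in>I. \<integral>\<^sup>+\<omega>. V k \<omega> \<partial>M) \<le>
    of_nat (card I) * (\<integral>\<^sup>+\<omega>. Max ((\<lambda>k. G k \<omega> * V k \<omega>) ` I) \<partial>M)"
proof -
  obtain j where j: "j \<in> I" using nonempty_index by blast
  have [measurable]: "(\<lambda>\<omega>. ennreal (max_share I (\<lambda>i. G i \<omega>) k * V k \<omega>)) \<in> borel_measurable M"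
    if "k \<in> I" for k
    using that by measurable
  have "(\<integral>\<^sup>+\<omega>. Max ((\<lambda>i. G i \<omega>) ` I) \<partial>M) * (\<Sum>k\<in>I. \<integral>\<^sup>+\<omega>. V k \<omega> \<partial>M) =
      of_nat (card I) * (\<Sum>k\<in>I. (\<integral>\<^sup>+\<omega>. max_share I (\<lambda>i. G i \<omega>) j \<partial>M) * (\<integral>\<^sup>+\<omega>. V k \<omega> \<partial>M))"
    by (simp add: card_mult_nn_integral_max_share[OF j, symmetric] sum_distrib_left mult.assoc)
  also have "\<dots> = of_nat (card I) * (\<Sum>k\<in>I. \<integral>\<^sup>+\<omega>. ennreal (max_share I (\<lambda>i. G i \<omega>) k * V k \<omega>) \<partial>M)"
  proof (intro arg_cong[where f = "\<lambda>s. of_nat (card I) * s"] sum.cong refl)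
    fix k assume k: "k \<in> I"
    show "(\<integral>\<^sup>+\<omega>. max_share I (\<lambda>i. G i \<omega>) j \<partial>M) * (\<integral>\<^sup>+\<omega>. V k \<omega> \<partial>M) =
        (\<integral>\<^sup>+\<omega>. ennreal (max_share I (\<lambda>i. G i \<omega>) k * V k \<omega>) \<partial>M)"
      by (rule nn_integral_max_share_mult_indep[where V = "V k", OF V_nonneg V_indep[OF k] k j, symmetric])
  qed
  also have "\<dots> = of_nat (card I) *
      (\<integral>\<^sup>+\<omega>. (\<Sum>k\<in>I. ennreal (max_share I (\<lambda>i. G i \<omega>) k * V k \<omega>)) \<partial>M)"
    using finite_index by (subst nn_integral_sum) auto
  also have "\<dots> \<le> of_nat (card I) * (\<integral>\<^sup>+\<omega>. Max ((\<lambda>k. G k \<omega> * V k \<omega>) ` I) \<partial>M)"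
    by (intro mult_left_mono nn_integral_sum_max_share_mult_le V_nonneg) simp
  finally show ?thesis .
qed

lemma integral_sum_mult_indep:
  assumes V_nonneg: "\<And>k \<omega>. 0 \<le> V k \<omega>" and [measurable]: "\<And>k. k \<in> I \<Longrightarrow> V k \<in> borel_measurable M"
    and V_indep: "\<And>k. k \<in> I \<Longrightarrow> indep_var borel (G k) borel (V k)"
    and "j \<in> I" and mean: "(\<integral>\<^sup>+\<omega>. G j \<omega> \<partial>M) = ennreal \<mu>"
  shows "(\<integral>\<omega>. (\<Sum>k\<in>I. G k \<omega> * V k \<omega>) \<partial>M) = enn2real (ennreal \<mu> * (\<Sum>k\<in>I. \<integral>\<^sup>+\<omega>. V k \<omega> \<partial>M))"
proof -
  have "(\<integral>\<omega>. (\<Sum>k\<in>I. G k \<omega> * V k \<omega>) \<partial>M) = enn2real (\<integral>\<^sup>+\<omega>. (\<Sum>k\<in>I. G k \<omega> * V k \<omega>) \<partial>M)"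
    using nonneg by (intro integral_eq_nn_integral) (auto intro!: sum_nonneg simp: V_nonneg elim!: AE_mp)
  also have "(\<integral>\<^sup>+\<omega>. (\<Sum>k\<in>I. G k \<omega> * V k \<omega>) \<partial>M) = (\<integral>\<^sup>+\<omega>. (\<Sum>k\<in>I. ennreal (G k \<omega> * V k \<omega>)) \<partial>M)"
    using nonneg by (intro nn_integral_cong_AE) (auto simp: sum_ennreal V_nonneg elim!: AE_mp)
  also have "\<dots> = (\<Sum>k\<in>I. \<integral>\<^sup>+\<omega>. ennreal (G k \<omega> * V k \<omega>) \<partial>M)"
    by (rule nn_integral_sum) auto
  also have "\<dots> = (\<Sum>k\<in>I. ennreal \<mu> * (\<integral>\<^sup>+\<omega>. V k \<omega> \<partial>M))"
  proof (rule sum.cong[OF refl])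
    fix k assume k: "k \<in> I"
    show "(\<integral>\<^sup>+\<omega>. ennreal (G k \<omega> * V k \<omega>) \<partial>M) = ennreal \<mu> * (\<integral>\<^sup>+\<omega>. V k \<omega> \<partial>M)"
      using indep_var_nn_integral_mult[OF V_indep[OF k] V_nonneg] nn_integral_G_eq[OF k \<open>j \<in> I\<close>] mean
      by simp
  qed
  finally show ?thesis by (simp add: sum_distrib_left)
qed


lemma nn_integral_Max_G_bounds:
  assumes "j \<in> I"
  shows "(\<integral>\<^sup>+\<omega>. G j \<omega> \<partial>M) \<le> (\<integral>\<^sup>+\<omega>. Max ((\<lambda>i. G i \<omega>) ` I) \<partial>M)"
    and "(\<integral>\<^sup>+\<omega>. Max ((\<lambda>i. G i \<omega>) ` I) \<partial>M) \<le> of_nat (card I) * (\<integral>\<^sup>+\<omega>. G j \<omega> \<partial>M)"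
proof -
  show "(\<integral>\<^sup>+\<omega>. G j \<omega> \<partial>M) \<le> (\<integral>\<^sup>+\<omega>. Max ((\<lambda>i. G i \<omega>) ` I) \<partial>M)"
    using assms finite_index by (intro nn_integral_mono ennreal_leI Max_ge) auto
  have "(\<integral>\<^sup>+\<omega>. Max ((\<lambda>i. G i \<omega>) ` I) \<partial>M) \<le> (\<integral>\<^sup>+\<omega>. (\<Sum>i\<in>I. ennreal (G i \<omega>)) \<partial>M)"
    using nonneg
  proof (intro nn_integral_mono_AE, eventually_elim)
    case (elim \<omega>)
    have "Max ((\<lambda>i. G i \<omega>) ` I) \<in> (\<lambda>i. G i \<omega>) ` I"
      using finite_index nonempty_index by (intro Max_in) auto
    then obtain i where "i \<in> I" "Max ((\<lambda>i. G i \<omega>) ` I) = G i \<omega>"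
      by auto
    then have "Max ((\<lambda>i. G i \<omega>) ` I) \<le> (\<Sum>i\<in>I. G i \<omega>)"
      using elim finite_index by (auto intro: member_le_sum)
    then show ?case
      using elim by (simp add: sum_ennreal ennreal_leI)
  qed
  also have "\<dots> = (\<Sum>i\<in>I. \<integral>\<^sup>+\<omega>. G i \<omega> \<partial>M)"
    using finite_index by (intro nn_integral_sum) auto
  also have "\<dots> = of_nat (card I) * (\<integral>\<^sup>+\<omega>. G j \<omega> \<partial>M)"
    using nn_integral_G_eq[OF _ assms] by (simp cong: sum.cong)
  finally show "(\<integral>\<^sup>+\<omega>. Max ((\<lambda>i. G i \<omega>) ` I) \<partial>M) \<le> of_nat (card I) * (\<integral>\<^sup>+\<omega>. G j \<omega> \<partial>M)" .
qed

theorem mean_sum_div_mean_Max_le: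
  assumes V_nonneg: "\<And>k \<omega>. 0 \<le> V k \<omega>" and V_meas [measurable]: "\<And>k. k \<in> I \<Longrightarrow> V k \<in> borel_measurable M"
    and V_indep: "\<And>k F. k \<in> I \<Longrightarrow> F \<in> borel_measurable (\<Pi>\<^sub>M i\<in>I. borel) \<Longrightarrow>
        indep_var borel (\<lambda>\<omega>. F (\<lambda>i\<in>I. G i \<omega>)) borel (V k)"
    and j: "j \<in> I" and mean: "(\<integral>\<^sup>+\<omega>. G j \<omega> \<partial>M) = ennreal \<mu>" "0 < \<mu>"
  shows "(\<integral>\<omega>. (\<Sum>k\<in>I. G k \<omega> * V k \<omega>) \<partial>M) / (\<integral>\<omega>. Max ((\<lambda>k. G k \<omega> * V k \<omega>) ` I) \<partial>M)
    \<le> real (card I) * (\<integral>\<omega>. G j \<omega> \<partial>M) / (\<integral>\<omega>. Max ((\<lambda>i. G i \<omega>) ` I) \<partial>M)"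
proof -
  have indep_G_V: "indep_var borel (G k) borel (V k)" if "k \<in> I" for k
    using V_indep[OF that, of "\<lambda>v. v k"] that by simp
  have sum: "(\<integral>\<omega>. (\<Sum>k\<in>I. G k \<omega> * V k \<omega>) \<partial>M) =
      enn2real (ennreal \<mu> * (\<Sum>k\<in>I. \<integral>\<^sup>+\<omega>. V k \<omega> \<partial>M))"
    using integral_sum_mult_indep[OF V_nonneg V_meas indep_G_V j mean(1)] .
  have "AE \<omega> in M. 0 \<le> Max ((\<lambda>k. G k \<omega> * V k \<omega>) ` I) \<and> 0 \<le> Max ((\<lambda>i. G i \<omega>) ` I) \<and> 0 \<le> G j \<omega>"
    using nonneg by eventually_elim (use j finite_index V_nonneg in \<open>auto intro!: Max_image_nonneg\<close>)
  moreover have "(\<lambda>\<omega>. Max ((\<lambda>k. G k \<omega> * V k \<omega>) ` I)) \<in> borel_measurable M"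
    "(\<lambda>\<omega>. Max ((\<lambda>i. G i \<omega>) ` I)) \<in> borel_measurable M"
    using finite_index by (intro borel_measurable_Max; measurable)+
  ultimately have Max: "(\<integral>\<omega>. Max ((\<lambda>k. G k \<omega> * V k \<omega>) ` I) \<partial>M) =
        enn2real (\<integral>\<^sup>+\<omega>. Max ((\<lambda>k. G k \<omega> * V k \<omega>) ` I) \<partial>M)"
      and Max_G: "(\<integral>\<omega>. Max ((\<lambda>i. G i \<omega>) ` I) \<partial>M) = enn2real (\<integral>\<^sup>+\<omega>. Max ((\<lambda>i. G i \<omega>) ` I) \<partial>M)"
      and G_j: "(\<integral>\<omega>. G j \<omega> \<partial>M) = \<mu>"
    using finite_index j mean by (subst integral_eq_nn_integral; auto elim: AE_mp)+
  show ?thesis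
    unfolding sum Max Max_G G_j
  proof (rule enn2real_ratio_le)
    show "(\<integral>\<^sup>+\<omega>. Max ((\<lambda>i. G i \<omega>) ` I) \<partial>M) * (\<Sum>k\<in>I. \<integral>\<^sup>+\<omega>. V k \<omega> \<partial>M) \<le>
        of_nat (card I) * (\<integral>\<^sup>+\<omega>. Max ((\<lambda>k. G k \<omega> * V k \<omega>) ` I) \<partial>M)"
      by (rule nn_integral_Max_mult_indep_ge[OF V_nonneg V_meas V_indep])
    show "ennreal \<mu> \<le> (\<integral>\<^sup>+\<omega>. Max ((\<lambda>i. G i \<omega>) ` I) \<partial>M)"
      using nn_integral_Max_G_bounds(1)[OF j] mean by simp
    show "(\<integral>\<^sup>+\<omega>. Max ((\<lambda>i. G i \<omega>) ` I) \<partial>M) \<noteq> \<top>"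
      using nn_integral_Max_G_bounds(2)[OF j] mean
      by (metis ennreal_of_nat_eq_real_of_nat ennreal_mult_eq_top_iff ennreal_neq_top neq_top_trans)
  qed (fact mean)
qed
end

section \<open>Interference of a Poisson point process\<close>

lemma suminf_ennreal_commute:
  fixes f :: "nat \<Rightarrow> nat \<Rightarrow> ennreal"
  shows "(\<Sum>i. \<Sum>j. f i j) = (\<Sum>j. \<Sum>i. f i j)"
proof -
  have "(\<Sum>i. \<Sum>j. f i j) = (\<Sum>i. \<integral>\<^sup>+j. f i j \<partial>count_space UNIV)"
    by (simp add: nn_integral_count_space_nat)
  also have "\<dots> = (\<integral>\<^sup>+j. (\<Sum>i. f i j) \<partial>count_space UNIV)"
    by (rule nn_integral_suminf[symmetric]) simp
  also have "\<dots> = (\<Sum>j. \<Sum>i. f i j)"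
    by (simp add: nn_integral_count_space_nat)
  finally show ?thesis .
qed

lemma poisson_mean_sums:
  fixes \<mu> :: real
  shows "(\<lambda>k. real k * (\<mu> ^ k / fact k * exp (- \<mu>))) sums \<mu>"
proof -
  have "(\<lambda>n. (\<mu> * exp (- \<mu>)) * (\<mu> ^ n / fact n)) sums ((\<mu> * exp (- \<mu>)) * exp \<mu>)"
    using exp_converges[of \<mu>] by (intro sums_mult) (simp add: divide_inverse mult.commute)
  moreover have "(\<mu> * exp (- \<mu>)) * exp \<mu> = \<mu>"
    by (simp add: exp_minus)
  moreover have "(\<mu> * exp (- \<mu>)) * (\<mu> ^ n / fact n) =
      real (Suc n) * (\<mu> ^ Suc n / fact (Suc n) * exp (- \<mu>))" for n
    by (simp add: field_simps del: of_nat_Suc)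
  ultimately have "(\<lambda>n. real (Suc n) * (\<mu> ^ Suc n / fact (Suc n) * exp (- \<mu>))) sums \<mu>"
    by (metis (no_types, lifting) sums_cong)
  then show ?thesis
    by (subst (asm) sums_Suc_iff) simp
qed

lemma (in prob_space) ppp_AE_finite:
  "is_ppp M lam x \<Longrightarrow> bounded B \<Longrightarrow> AE \<omega> in M. finite {i. x i \<omega> \<in> B}"
  unfolding is_ppp_def by (auto elim: AE_mp)

lemma (in prob_space) nn_integral_poisson_count:
  fixes K :: "'a \<Rightarrow> nat"
  assumes \<mu>: "0 \<le> \<mu>" and poisson: "\<And>k. prob {\<omega> \<in> space M. K \<omega> = k} = \<mu> ^ k / fact k * exp (- \<mu>)"
  shows "(\<integral>\<^sup>+\<omega>. of_nat (K \<omega>) \<partial>M) = ennreal \<mu>"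
proof (cases "\<mu> = 0")
  case True
  then have "AE \<omega> in M. \<omega> \<in> {\<omega> \<in> space M. K \<omega> = 0}"
    using poisson[of 0] by (intro AE_prob_1) simp
  then have "AE \<omega> in M. K \<omega> = 0"
    by eventually_elim simp
  then have "(\<integral>\<^sup>+\<omega>. of_nat (K \<omega>) \<partial>M) = (\<integral>\<^sup>+\<omega>. 0 \<partial>M)"
    by (intro nn_integral_cong_AE) (auto elim: AE_mp)
  then show ?thesis using True by simp
next
  case False
  define P where "P k = {\<omega> \<in> space M. K \<omega> = k}" for k
  \<comment> \<open>Each level set has positive probability, hence is measurable (non-events have measure 0).\<close>
  have P_sets: "P k \<in> sets M" for k
  proof (rule ccontr)
    assume "P k \<notin> sets M"
    then have "prob (P k) = 0" by (rule measure_notin_sets)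
    then show False using poisson[of k] \<mu> False by (simp add: P_def)
  qed
  have "(\<integral>\<^sup>+\<omega>. of_nat (K \<omega>) \<partial>M) = (\<integral>\<^sup>+\<omega>. (\<Sum>k. of_nat k * indicator (P k) \<omega>) \<partial>M)"
  proof (rule nn_integral_cong)
    fix \<omega> assume "\<omega> \<in> space M"
    have "(\<Sum>k. of_nat k * indicator (P k) \<omega> :: ennreal) = (\<Sum>k\<in>{K \<omega>}. of_nat k * indicator (P k) \<omega>)"
      by (rule suminf_finite) (auto simp: P_def)
    then show "(of_nat (K \<omega>) :: ennreal) = (\<Sum>k. of_nat k * indicator (P k) \<omega>)"
      using \<open>\<omega> \<in> space M\<close> by (simp add: P_def)
  qed
  also have "\<dots> = (\<Sum>k. of_nat k * emeasure M (P k))"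
    using P_sets by (simp add: nn_integral_suminf nn_integral_cmult_indicator)
  also have "\<dots> = (\<Sum>k. ennreal (real k * (\<mu> ^ k / fact k * exp (- \<mu>))))"
    using P_sets poisson \<mu>
    by (simp add: P_def emeasure_eq_measure ennreal_of_nat_eq_real_of_nat ennreal_mult'[symmetric])
  also have "\<dots> = ennreal \<mu>"
    by (rule suminf_ennreal_eq[OF _ poisson_mean_sums]) (use \<mu> in simp)
  finally show ?thesis .
qed

lemma (in prob_space) ppp_expected_count:
  assumes ppp: "is_ppp M lam x" and lam: "0 \<le> lam" and B: "B \<in> sets borel" "bounded B"
  shows "(\<integral>\<^sup>+\<omega>. (\<Sum>i. indicator B (x i \<omega>)) \<partial>M) = ennreal (lam * measure lborel B)"
proof -
  have "(\<integral>\<^sup>+\<omega>. (\<Sum>i. indicator B (x i \<omega>)) \<partial>M) = (\<integral>\<^sup>+\<omega>. of_nat (pcount x B \<omega>) \<partial>M)"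
    using ppp_AE_finite[OF ppp B(2)]
  proof (intro nn_integral_cong_AE, eventually_elim)
    case (elim \<omega>)
    have "(\<Sum>i. indicator B (x i \<omega>) :: ennreal) = (\<Sum>i\<in>{i. x i \<omega> \<in> B}. indicator B (x i \<omega>))"
      using elim by (intro suminf_finite) auto
    then show ?case by (simp add: pcount_def)
  qed
  also have "\<dots> = ennreal (lam * measure lborel B)"
    using ppp B lam by (intro nn_integral_poisson_count) (auto simp: is_ppp_def)
  finally show ?thesis .
qed

lemma dyadic_bracket:
  fixes r :: real
  assumes "1 < r"
  shows "\<exists>j::nat. 2 ^ j < r \<and> r \<le> 2 ^ Suc j"
proof -
  define S where "S = {j::nat. 2 ^ j < r}"
  obtain n :: nat where n: "r < 2 ^ n"
    using real_arch_pow[of 2 r] by auto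
  have "S \<subseteq> {..<n}"
  proof
    fix j assume "j \<in> S"
    then have "(2::real) ^ j < 2 ^ n"
      using n unfolding S_def by (meson mem_Collect_eq less_trans)
    then show "j \<in> {..<n}" by (simp add: power_strict_increasing_iff)
  qed
  then have fin: "finite S" by (rule finite_subset) simp
  moreover have "0 \<in> S" using assms by (simp add: S_def)
  ultimately have "Max S \<in> S" by (intro Max_in) auto
  moreover have "Suc (Max S) \<notin> S"
    using Max_ge[OF fin, of "Suc (Max S)"] by auto
  ultimately show ?thesis
    by (intro exI[of _ "Max S"]) (auto simp: S_def not_less)
qed

definition dyadic_annulus :: "nat \<Rightarrow> (real^2) set" where
  "dyadic_annulus j = {y. 2 ^ j < norm y \<and> norm y \<le> 2 ^ Suc j}"

lemma sets_dyadic_annulus [measurable]: "dyadic_annulus j \<in> sets borel"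
  unfolding dyadic_annulus_def by measurable

lemma bounded_dyadic_annulus: "bounded (dyadic_annulus j)"
  unfolding dyadic_annulus_def bounded_iff by auto

lemma measure_dyadic_annulus_le: "measure lborel (dyadic_annulus j) \<le> 16 * 4 ^ j"
proof -
  define r :: real where "r = 2 ^ Suc j"
  have r: "0 \<le> r" by (simp add: r_def)
  have sub: "dyadic_annulus j \<subseteq> cbox (\<chi> i. - r) (\<chi> i. r)"
  proof
    fix y assume "y \<in> dyadic_annulus j"
    then have "norm y \<le> r" by (simp add: dyadic_annulus_def r_def)
    then have "\<bar>y $ i\<bar> \<le> r" for i
      using component_le_norm_cart[of y i] by linarith
    then have "- r \<le> y $ i \<and> y $ i \<le> r" for i
      by (simp add: abs_le_iff) (meson minus_le_iff)
    then show "y \<in> cbox (\<chi> i. - r) (\<chi> i. r)"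
      by (simp add: mem_box_cart)
  qed
  have "measure lborel (dyadic_annulus j) \<le> measure lborel (cbox (\<chi> i. - r) (\<chi> i. r) :: (real^2) set)"
    by (rule measure_mono_fmeasurable[OF sub]) auto
  also have "\<dots> = (2 * r) ^ 2"
  proof (subst content_cbox_cart)
    have "(0::real^2) \<in> cbox (\<chi> i. - r) (\<chi> i. r)"
      using r by (simp add: mem_box_cart)
    then show "cbox (\<chi> i. - r) (\<chi> i. r) \<noteq> ({}::(real^2) set)" by auto
  qed (simp add: power2_eq_square)
  also have "\<dots> = 16 * 4 ^ j"
  proof -
    have "(4::real) ^ j = (2 ^ 2) ^ j" by simp
    then have "(4::real) ^ j = 2 ^ (j * 2)"
      by (simp only: power_mult[symmetric] mult.commute)
    then show ?thesis by (simp add: r_def power_mult_distrib power_mult[symmetric])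
  qed
  finally show ?thesis .
qed

text \<open>The path loss outside the unit disc; the finitely many points inside it are handled separately.\<close>
definition far_field :: "real \<Rightarrow> real^2 \<Rightarrow> real" where
  "far_field \<alpha> y = (if 1 < norm y then norm y powr (- \<alpha>) else 0)"

lemma far_field_nonneg: "0 \<le> far_field \<alpha> y"
  by (simp add: far_field_def)

lemma borel_measurable_far_field [measurable]: "far_field \<alpha> \<in> borel_measurable borel"
  unfolding far_field_def by measurable

lemma far_field_le_dyadic:
  assumes "0 < \<alpha>"
  shows "ennreal (far_field \<alpha> y) \<le> (\<Sum>j. ennreal ((2 powr (- \<alpha>)) ^ j) * indicator (dyadic_annulus j) y)"
proof (cases "1 < norm y")
  case True
  obtain j where j: "2 ^ j < norm y" "norm y \<le> 2 ^ Suc j"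
    using dyadic_bracket[OF True] by blast
  have "norm y powr (- \<alpha>) \<le> (2 ^ j) powr (- \<alpha>)"
    using j assms by (intro powr_mono2') auto
  also have "(2 ^ j :: real) powr (- \<alpha>) = (2 powr (- \<alpha>)) ^ j"
    by (simp add: powr_realpow[symmetric] powr_powr mult.commute)
  finally have "ennreal (far_field \<alpha> y) \<le> ennreal ((2 powr (- \<alpha>)) ^ j) * indicator (dyadic_annulus j) y"
    using True j by (simp add: far_field_def dyadic_annulus_def ennreal_leI)
  also have "\<dots> \<le> (\<Sum>j. ennreal ((2 powr (- \<alpha>)) ^ j) * indicator (dyadic_annulus j) y)"
  proof -
    define f where "f = (\<lambda>j. ennreal ((2 powr (- \<alpha>)) ^ j) * indicator (dyadic_annulus j) y)"
    have "f j \<le> suminf f"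
      using sum_le_suminf[of f "{j}"] by (auto intro: summableI)
    then show ?thesis by (simp add: f_def)
  qed
  finally show ?thesis .
qed (simp add: far_field_def)

text \<open>For \<open>\<alpha> > 2\<close> the far-field interference has finite mean: the \<open>j\<close>-th dyadic annulus holds
  \<open>O(4\<^sup>j)\<close> points on average, each contributing at most \<open>2\<^sup>-\<^sup>\<alpha>\<^sup>j\<close>.\<close>
lemma (in prob_space) nn_integral_ppp_far_field_finite:
  assumes ppp: "is_ppp M lam x" and lam: "0 \<le> lam" and \<alpha>: "2 < \<alpha>"
  shows "(\<integral>\<^sup>+\<omega>. (\<Sum>i. ennreal (far_field \<alpha> (x i \<omega>))) \<partial>M) < \<top>"
proof -
  define q :: real where "q = 2 powr (- \<alpha>)"
  have q: "0 \<le> q" "4 * q < 1"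
  proof -
    have "(2::real) powr (- \<alpha>) < 2 powr (- 2)"
      using \<alpha> by (intro powr_less_mono) auto
    then show "4 * q < 1" by (simp add: q_def powr_minus powr_numeral)
  qed (simp add: q_def)
  have [measurable]: "x i \<in> borel_measurable M" for i
    using ppp by (simp add: is_ppp_def)
  have "(\<integral>\<^sup>+\<omega>. (\<Sum>i. ennreal (far_field \<alpha> (x i \<omega>))) \<partial>M) \<le>
      (\<integral>\<^sup>+\<omega>. (\<Sum>i. \<Sum>j. ennreal (q ^ j) * indicator (dyadic_annulus j) (x i \<omega>)) \<partial>M)"
    using \<alpha> by (intro nn_integral_mono suminf_le) (auto simp: q_def intro!: far_field_le_dyadic summableI)
  also have "\<dots> = (\<integral>\<^sup>+\<omega>. (\<Sum>j. ennreal (q ^ j) * (\<Sum>i. indicator (dyadic_annulus j) (x i \<omega>))) \<partial>M)"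
    by (simp add: suminf_ennreal_commute[of "\<lambda>i j. ennreal (q ^ j) * indicator (dyadic_annulus j) (x i _)"])
  also have "\<dots> = (\<Sum>j. ennreal (q ^ j) * ennreal (lam * measure lborel (dyadic_annulus j)))"
    by (subst nn_integral_suminf, measurable)
       (simp add: nn_integral_cmult ppp_expected_count[OF ppp lam] bounded_dyadic_annulus)
  also have "\<dots> \<le> (\<Sum>j. ennreal (16 * lam * (4 * q) ^ j))"
  proof (intro suminf_le summableI)
    fix j
    have "q ^ j * (lam * measure lborel (dyadic_annulus j)) \<le> q ^ j * (lam * (16 * 4 ^ j))"
      using lam q measure_dyadic_annulus_le[of j] by (intro mult_left_mono) auto
    also have "\<dots> = 16 * lam * (4 * q) ^ j"
      by (simp add: power_mult_distrib)
    finally show "ennreal (q ^ j) * ennreal (lam * measure lborel (dyadic_annulus j)) \<le>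
        ennreal (16 * lam * (4 * q) ^ j)"
      using q lam by (simp add: ennreal_mult[symmetric] ennreal_leI)
  qed
  also have "\<dots> < \<top>"
    using q lam summable_geometric[of "4 * q"]
    by (simp add: ennreal_suminf_neq_top summable_mult top.not_eq_extremum[symmetric])
  finally show ?thesis .
qed

lemma summable_path_loss:
  fixes h :: "nat \<Rightarrow> real" and y :: "nat \<Rightarrow> real^2"
  assumes far: "(\<Sum>i. ennreal (h i * far_field \<alpha> (y i))) \<noteq> \<top>" and h: "\<And>i. 0 \<le> h i"
    and near: "finite {i. y i \<in> cball 0 1}"
  shows "summable (\<lambda>i. h i * norm (y i) powr (- \<alpha>))"
proof -
  define F where "F = {i. y i \<in> cball 0 1}"
  define a where "a i = h i * norm (y i) powr (- \<alpha>)" for i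
  have a: "0 \<le> a i" for i using h by (simp add: a_def)
  have le: "ennreal (a i) \<le> ennreal (h i * far_field \<alpha> (y i)) + (if i \<in> F then ennreal (a i) else 0)" for i
  proof (cases "i \<in> F")
    case False
    then have "a i = h i * far_field \<alpha> (y i)"
      by (simp add: a_def far_field_def F_def)
    then show ?thesis using False by simp
  qed simp
  have "(\<Sum>i. ennreal (a i)) \<le> (\<Sum>i. ennreal (h i * far_field \<alpha> (y i)) + (if i \<in> F then ennreal (a i) else 0))"
    by (intro suminf_le le summableI)
  also have "\<dots> = (\<Sum>i. ennreal (h i * far_field \<alpha> (y i))) + (\<Sum>i. if i \<in> F then ennreal (a i) else 0)"
    by (rule suminf_add[symmetric]) (auto intro: summableI)
  also have "(\<Sum>i. if i \<in> F then ennreal (a i) else 0) = (\<Sum>i\<in>F. ennreal (a i))"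
    using near by (subst suminf_finite[of F]) (auto simp: F_def)
  also have "(\<Sum>i. ennreal (h i * far_field \<alpha> (y i))) + (\<Sum>i\<in>F. ennreal (a i)) < \<top>"
    using far by (simp add: sum_ennreal a ennreal_add_eq_top top.not_eq_extremum[symmetric])
  finally have "(\<Sum>i. ennreal (a i)) \<noteq> \<top>"
    by simp
  then show ?thesis
    using summable_suminf_not_top[OF a] by (simp add: a_def)
qed

lemma (in prob_space) nn_integral_far_field_interference_finite:
  fixes h :: "nat \<Rightarrow> 'a \<Rightarrow> real"
  assumes ppp: "is_ppp M lam x" and lam: "0 \<le> lam" and \<alpha>: "2 < \<alpha>"
    and h_mean: "\<And>i. (\<integral>\<^sup>+\<omega>. h i \<omega> \<partial>M) \<le> ennreal c"
    and indep: "\<And>i F. F \<in> borel_measurable (\<Pi>\<^sub>M i\<in>UNIV. borel) \<Longrightarrow>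
        indep_var borel (\<lambda>\<omega>. F (\<lambda>i. x i \<omega>)) borel (h i)"
  shows "(\<integral>\<^sup>+\<omega>. (\<Sum>i. ennreal (h i \<omega> * far_field \<alpha> (x i \<omega>))) \<partial>M) < \<top>"
proof -
  have far_indep: "indep_var borel (h i) borel (\<lambda>\<omega>. far_field \<alpha> (x i \<omega>))" for i
    by (rule indep_var_commute, rule indep) measurable
  have [measurable]: "h i \<in> borel_measurable M" for i
    using indep_var_rv1[OF far_indep] by simp
  have [measurable]: "x i \<in> borel_measurable M" for i
    using ppp by (simp add: is_ppp_def)
  have "(\<integral>\<^sup>+\<omega>. (\<Sum>i. ennreal (h i \<omega> * far_field \<alpha> (x i \<omega>))) \<partial>M) =
      (\<Sum>i. \<integral>\<^sup>+\<omega>. ennreal (h i \<omega> * far_field \<alpha> (x i \<omega>)) \<partial>M)"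
    by (rule nn_integral_suminf) measurable
  also have "\<dots> = (\<Sum>i. (\<integral>\<^sup>+\<omega>. h i \<omega> \<partial>M) * (\<integral>\<^sup>+\<omega>. far_field \<alpha> (x i \<omega>) \<partial>M))"
    using indep_var_nn_integral_mult[OF far_indep far_field_nonneg] by simp
  also have "\<dots> \<le> (\<Sum>i. ennreal c * (\<integral>\<^sup>+\<omega>. far_field \<alpha> (x i \<omega>) \<partial>M))"
    by (intro suminf_le mult_right_mono h_mean summableI zero_le)
  also have "\<dots> = ennreal c * (\<integral>\<^sup>+\<omega>. (\<Sum>i. ennreal (far_field \<alpha> (x i \<omega>))) \<partial>M)"
  proof -
    have "(\<Sum>i. \<integral>\<^sup>+\<omega>. far_field \<alpha> (x i \<omega>) \<partial>M) = (\<integral>\<^sup>+\<omega>. (\<Sum>i. ennreal (far_field \<alpha> (x i \<omega>))) \<partial>M)"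
      by (rule nn_integral_suminf[symmetric]) measurable
    then show ?thesis by simp
  qed
  also have "\<dots> < \<top>"
    using nn_integral_ppp_far_field_finite[OF ppp lam \<alpha>]
    by (simp add: ennreal_mult_less_top top.not_eq_extremum)
  finally show ?thesis .
qed

lemma (in prob_space) summable_interference_AE:
  fixes h :: "nat \<Rightarrow> 'a \<Rightarrow> real"
  assumes ppp: "is_ppp M lam x" and lam: "0 \<le> lam" and \<alpha>: "2 < \<alpha>"
    and h_nonneg: "\<And>i. AE \<omega> in M. 0 \<le> h i \<omega>"
    and h_mean: "\<And>i. (\<integral>\<^sup>+\<omega>. h i \<omega> \<partial>M) \<le> ennreal c"
    and indep: "\<And>i F. F \<in> borel_measurable (\<Pi>\<^sub>M i\<in>UNIV. borel) \<Longrightarrow>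
        indep_var borel (\<lambda>\<omega>. F (\<lambda>i. x i \<omega>)) borel (h i)"
  shows "AE \<omega> in M. summable (\<lambda>i. h i \<omega> * norm (x i \<omega>) powr (- \<alpha>))"
proof -
  have [measurable]: "h i \<in> borel_measurable M" for i
    using indep_var_rv2[OF indep[OF borel_measurable_const]] by simp
  have [measurable]: "x i \<in> borel_measurable M" for i
    using ppp by (simp add: is_ppp_def)
  have "AE \<omega> in M. (\<Sum>i. ennreal (h i \<omega> * far_field \<alpha> (x i \<omega>))) \<noteq> \<top>"
    using nn_integral_far_field_interference_finite[OF ppp lam \<alpha> h_mean indep]
      nn_integral_PInf_AE[of "\<lambda>\<omega>. \<Sum>i. ennreal (h i \<omega> * far_field \<alpha> (x i \<omega>))" M]
    by (simp add: top.not_eq_extremum)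
  moreover have "AE \<omega> in M. \<forall>i. 0 \<le> h i \<omega>"
    using h_nonneg by (simp add: AE_all_countable)
  moreover have "AE \<omega> in M. finite {i. x i \<omega> \<in> cball 0 1}"
    by (rule ppp_AE_finite[OF ppp]) simp
  ultimately show ?thesis
    by eventually_elim (auto intro: summable_path_loss)
qed

section \<open>Gains, interference fading and the point process\<close>

locale fading_model = prob_space M for M :: "'a measure" +
  fixes N :: nat and x :: "nat \<Rightarrow> 'a \<Rightarrow> real^2"
    and g :: "nat \<Rightarrow> 'a \<Rightarrow> real" and h :: "nat \<Rightarrow> nat \<Rightarrow> 'a \<Rightarrow> real"
  assumes points_measurable: "\<And>i. x i \<in> borel_measurable M"
    and gh_indep: "indep_vars (\<lambda>_. borel)
        (\<lambda>k \<omega>. case k of Inl n \<Rightarrow> g n \<omega> | Inr (n, i) \<Rightarrow> h n i \<omega>)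
        (Inl ` {1..N} \<union> Inr ` ({1..N} \<times> UNIV))"
    and x_indep: "indep_set
        (sigma_sets (space M) {(\<lambda>\<omega> i. x i \<omega>) -` A \<inter> space M | A.
            A \<in> sets (Pi\<^sub>M UNIV (\<lambda>_. borel))})
        (sigma_sets (space M) {(\<lambda>\<omega>. restrict (\<lambda>k. case k of Inl n \<Rightarrow> g n \<omega> | Inr (n, i) \<Rightarrow> h n i \<omega>)
                 (Inl ` {1..N} \<union> Inr ` ({1..N} \<times> UNIV))) -` A \<inter> space M | A.
            A \<in> sets (Pi\<^sub>M (Inl ` {1..N} \<union> Inr ` ({1..N} \<times> UNIV)) (\<lambda>_. borel))})"
begin

definition fading :: "nat + nat \<times> nat \<Rightarrow> 'a \<Rightarrow> real" where
  "fading k \<omega> = (case k of Inl n \<Rightarrow> g n \<omega> | Inr (n, i) \<Rightarrow> h n i \<omega>)"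

lemma fading_simps [simp]: "fading (Inl n) = g n" "fading (Inr (n, i)) = h n i"
  by (simp_all add: fun_eq_iff fading_def)

definition fading_algebra :: "(nat + nat \<times> nat) set \<Rightarrow> 'a measure" where
  "fading_algebra J = vimage_algebra (space M) (\<lambda>\<omega>. \<lambda>k\<in>J. fading k \<omega>) (\<Pi>\<^sub>M k\<in>J. borel)"

definition points_algebra :: "'a measure" where
  "points_algebra = vimage_algebra (space M) (\<lambda>\<omega> i. x i \<omega>) (\<Pi>\<^sub>M i\<in>UNIV. borel)"

lemma fading_indep: "indep_vars (\<lambda>_. borel) fading (Inl ` {1..N} \<union> Inr ` ({1..N} \<times> UNIV))"
  using gh_indep by (simp add: fading_def[abs_def])

lemma points_indep_fading:
  "indep_set (sets points_algebra) (sets (fading_algebra (Inl ` {1..N} \<union> Inr ` ({1..N} \<times> UNIV))))"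
  using x_indep by (simp add: points_algebra_def fading_algebra_def sets_vimage_algebra fading_def)

lemma measurable_fading:
  assumes "j \<in> J"
  shows "fading j \<in> borel_measurable (fading_algebra J)"
proof -
  have "(\<lambda>\<omega>. \<lambda>k\<in>J. fading k \<omega>) \<in> measurable (fading_algebra J) (\<Pi>\<^sub>M k\<in>J. borel)"
    unfolding fading_algebra_def by (rule measurable_vimage_algebra1) (auto simp: space_PiM)
  from measurable_compose[OF this measurable_component_singleton[OF assms]] show ?thesis
    using assms by simp
qed

lemma measurable_points_vector:
  "(\<lambda>\<omega> i. x i \<omega>) \<in> measurable points_algebra (\<Pi>\<^sub>M i\<in>UNIV. borel)"
  unfolding points_algebra_def by (rule measurable_vimage_algebra1) (auto simp: space_PiM)

lemma gains_indep: "indep_vars (\<lambda>_. borel) g {1..N}"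
proof -
  have "indep_vars (\<lambda>_. borel) fading (Inl ` {1..N})"
    by (rule indep_vars_subset[OF fading_indep]) auto
  from indep_vars_reindex[OF _ this] show ?thesis
    by simp
qed

lemma points_indep_fading_coefficient:
  assumes "k \<in> {1..N}" and F: "F \<in> borel_measurable (\<Pi>\<^sub>M i\<in>UNIV. borel)"
  shows "indep_var borel (\<lambda>\<omega>. F (\<lambda>i. x i \<omega>)) borel (h k i)"
proof (rule indep_var_sub_sigma_algebras[OF points_indep_fading])
  show "(\<lambda>\<omega>. F (\<lambda>i. x i \<omega>)) \<in> borel_measurable points_algebra"
    using measurable_compose[OF measurable_points_vector F] by simp
  show "h k i \<in> borel_measurable (fading_algebra (Inl ` {1..N} \<union> Inr ` ({1..N} \<times> UNIV)))"
    using measurable_fading[of "Inr (k, i)"] assms by simp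
qed (simp_all add: points_algebra_def fading_algebra_def)

text \<open>The gains are independent of the point process and the interference fading jointly, and the
  inverse interference is a function of the latter two.\<close>
lemma gains_indep_inverse_interference:
  assumes k: "k \<in> {1..N}" and F: "F \<in> borel_measurable (\<Pi>\<^sub>M n\<in>{1..N}. borel)"
  shows "indep_var borel (\<lambda>\<omega>. F (\<lambda>n\<in>{1..N}. g n \<omega>)) borel (\<lambda>\<omega>. max 0 (1 / interf d \<alpha> h x k \<omega>))"
proof -
  let ?H = "fading_algebra (Inr ` ({1..N} \<times> UNIV))"
  let ?E = "{a \<inter> c |a c. a \<in> sets points_algebra \<and> c \<in> sets ?H}"
  have indep: "indep_set (sets (fading_algebra (Inl ` {1..N}))) (sigma_sets (space M) ?E)"
    unfolding fading_algebra_def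
    by (rule indep_restrict_join[OF fading_indep _ _ _ points_indep_fading[unfolded fading_algebra_def]])
       (auto simp: points_algebra_def)
  have E: "?E \<subseteq> Pow (space M)"
    using sets.sets_into_space by (fastforce simp: points_algebra_def fading_algebra_def)
  have "sets points_algebra \<subseteq> sets (sigma (space M) ?E)" "sets ?H \<subseteq> sets (sigma (space M) ?E)"
    by (rule sets_subset_sigma_Int; simp add: points_algebra_def fading_algebra_def)+
  then have "x i \<in> borel_measurable (sigma (space M) ?E)" "h k i \<in> borel_measurable (sigma (space M) ?E)"
    for i
    using measurable_compose[OF measurable_points_vector measurable_component_singleton[of i UNIV]]
      measurable_fading[of "Inr (k, i)" "Inr ` ({1..N} \<times> UNIV)"] k
      measurable_mono[of borel borel points_algebra "sigma (space M) ?E"]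
      measurable_mono[of borel borel ?H "sigma (space M) ?E"]
    by (auto simp: fading_def points_algebra_def fading_algebra_def space_measure_of_conv)
  then have "(\<lambda>\<omega>. max 0 (1 / interf d \<alpha> h x k \<omega>)) \<in> borel_measurable (sigma (space M) ?E)"
    unfolding interf_def by measurable
  moreover have "(\<lambda>\<omega>. \<lambda>n\<in>{1..N}. g n \<omega>) \<in> measurable (fading_algebra (Inl ` {1..N})) (\<Pi>\<^sub>M n\<in>{1..N}. borel)"
    using measurable_fading[of "Inl _" "Inl ` {1..N}"] by (intro measurable_restrict) simp
  ultimately show ?thesis
    using indep measurable_compose[OF _ F] E
    by (intro indep_var_sub_sigma_algebras[of "fading_algebra (Inl ` {1..N})" "sigma (space M) ?E"])
       (simp_all add: sets_measure_of[OF E] fading_algebra_def space_measure_of_conv)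
qed

lemma measurable_interf [measurable]:
  assumes "n \<in> {1..N}"
  shows "interf d \<alpha> h x n \<in> borel_measurable M"
proof -
  have [measurable]: "h n i \<in> borel_measurable M" for i
    using fading_indep assms by (auto simp: indep_vars_def dest: bspec[of _ _ "Inr (n, i)"])
  note points_measurable [measurable]
  show ?thesis unfolding interf_def by measurable
qed

text \<open>\<open>suminf\<close> of a divergent series is unspecified, so nonnegativity needs almost sure convergence.\<close>
lemma interf_nonneg_AE:
  assumes ppp: "is_ppp M lam x" and lam: "0 \<le> lam" and \<alpha>: "2 < \<alpha>" and mI: "0 < mI"
    and h_distr: "\<And>n i. n \<in> {1..N} \<Longrightarrow> distributed M lborel (h n i) (\<lambda>t. ennreal (gamma_density mI (1 / mI) t))"
  shows "AE \<omega> in M. \<forall>k\<in>{1..N}. 0 \<le> interf d \<alpha> h x k \<omega>"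
proof (rule AE_finite_allI)
  fix k assume k: "k \<in> {1..N}"
  have h_nonneg: "AE \<omega> in M. 0 \<le> h k i \<omega>" for i
    by (rule gamma_distributed_AE_nonneg[OF h_distr[OF k]])
  have "AE \<omega> in M. summable (\<lambda>i. h k i \<omega> * norm (x i \<omega>) powr (- \<alpha>))"
    using gamma_distributed_nn_integral[OF mI h_distr[OF k]] points_indep_fading_coefficient[OF k]
    by (intro summable_interference_AE[OF ppp lam \<alpha> h_nonneg, where c = 1]) auto
  moreover have "AE \<omega> in M. \<forall>i. 0 \<le> h k i \<omega>"
    using h_nonneg by (simp add: AE_all_countable)
  ultimately show "AE \<omega> in M. 0 \<le> interf d \<alpha> h x k \<omega>"
    by eventually_elim (simp add: interf_def suminf_nonneg)
qed simp


lemma iid_nonneg_gains: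
  assumes "1 \<le> N" and g_distr: "\<And>n. n \<in> {1..N} \<Longrightarrow> distributed M lborel (g n) f"
    and f: "\<And>t. t < 0 \<Longrightarrow> f t = 0"
  shows "iid_nonneg M {1..N} g (density lborel f)"
proof
  show "distr M borel (g n) = density lborel f" if "n \<in> {1..N}" for n
    using distributed_distr_eq_density[OF g_distr[OF that]] by (simp cong: distr_cong)
  show "AE \<omega> in M. \<forall>n\<in>{1..N}. 0 \<le> g n \<omega>"
    using distributed_AE_nonneg[OF g_distr f] by (intro AE_finite_allI) auto
qed (use \<open>1 \<le> N\<close> gains_indep in auto)

theorem mrc_div_selection_le:
  assumes "1 \<le> N" and G: "iid_nonneg M {1..N} g D" and g_mean: "(\<integral>\<^sup>+\<omega>. g 1 \<omega> \<partial>M) = ennreal \<mu>" "0 < \<mu>"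
    and ppp: "is_ppp M lam x" "0 \<le> lam" and "2 < \<alpha>" "0 < mI"
    and h_distr: "\<And>n i. n \<in> {1..N} \<Longrightarrow> distributed M lborel (h n i) (\<lambda>t. ennreal (gamma_density mI (1 / mI) t))"
  shows "(\<integral>\<omega>. (\<Sum>n=1..N. g n \<omega> / interf d \<alpha> h x n \<omega>) \<partial>M) /
      (\<integral>\<omega>. Max ((\<lambda>n. g n \<omega> / interf d \<alpha> h x n \<omega>) ` {1..N}) \<partial>M)
    \<le> real N * (\<integral>\<omega>. g 1 \<omega> \<partial>M) / (\<integral>\<omega>. Max ((\<lambda>n. g n \<omega>) ` {1..N}) \<partial>M)"
proof -
  interpret G: iid_nonneg M "{1..N}" g D by (fact G)
  \<comment> \<open>With \<open>1 / 0 = 0\<close>, \<open>g\<^sub>n / I\<^sub>n = g\<^sub>n Y\<^sub>n\<close> holds wherever \<open>I\<^sub>n \<ge> 0\<close>, including \<open>I\<^sub>n = 0\<close>.\<close>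
  define Y where "Y k \<omega> = max 0 (1 / interf d \<alpha> h x k \<omega>)" for k \<omega>
  have "AE \<omega> in M. \<forall>n\<in>{1..N}. 0 \<le> interf d \<alpha> h x n \<omega>"
    using ppp \<open>2 < \<alpha>\<close> \<open>0 < mI\<close> h_distr by (rule interf_nonneg_AE)
  then have "AE \<omega> in M. \<forall>n\<in>{1..N}. g n \<omega> / interf d \<alpha> h x n \<omega> = g n \<omega> * Y n \<omega>"
    by eventually_elim (simp add: Y_def divide_inverse)
  moreover have [measurable]: "Y n \<in> borel_measurable M" if "n \<in> {1..N}" for n
    using that unfolding Y_def by measurable
  ultimately have "(\<integral>\<omega>. (\<Sum>n=1..N. g n \<omega> / interf d \<alpha> h x n \<omega>) \<partial>M) /
      (\<integral>\<omega>. Max ((\<lambda>n. g n \<omega> / interf d \<alpha> h x n \<omega>) ` {1..N}) \<partial>M) =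
      (\<integral>\<omega>. (\<Sum>n\<in>{1..N}. g n \<omega> * Y n \<omega>) \<partial>M) / (\<integral>\<omega>. Max ((\<lambda>n. g n \<omega> * Y n \<omega>) ` {1..N}) \<partial>M)"
    by (intro arg_cong2[where f = "(/)"] integral_cong_AE) (auto elim!: AE_mp)
  also have "\<dots> \<le> real (card {1..N}) * (\<integral>\<omega>. g 1 \<omega> \<partial>M) / (\<integral>\<omega>. Max ((\<lambda>n. g n \<omega>) ` {1..N}) \<partial>M)"
    using \<open>1 \<le> N\<close> gains_indep_inverse_interference g_mean
    by (intro G.mean_sum_div_mean_Max_le) (auto simp: Y_def)
  finally show ?thesis by simp
qed

end

theorem mainTheorem9:
  fixes M :: "'a measure" and N :: nat and lam d \<alpha> mI :: real and mD :: nat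
    and x :: "nat \<Rightarrow> 'a \<Rightarrow> real^2"
    and g :: "nat \<Rightarrow> 'a \<Rightarrow> real" and h :: "nat \<Rightarrow> nat \<Rightarrow> 'a \<Rightarrow> real"
  assumes "prob_space M"
    and "N \<ge> 1" and "lam > 0" and "d > 0" and "\<alpha> > 2" and "mD \<ge> 1" and "mI > 0"
    and ppp: "is_ppp M lam x"
    and g_distr: "\<And>n. n \<in> {1..N} \<Longrightarrow>
        distributed M lborel (g n) (\<lambda>t. ennreal (gamma_density (real mD) (1 / real mD) t))"
    and h_distr: "\<And>n i. n \<in> {1..N} \<Longrightarrow>
        distributed M lborel (h n i) (\<lambda>t. ennreal (gamma_density mI (1 / mI) t))"
    and gh_indep: "prob_space.indep_vars M (\<lambda>_. borel)
        (\<lambda>k \<omega>. case k of Inl n \<Rightarrow> g n \<omega> | Inr (n, i) \<Rightarrow> h n i \<omega>)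
        (Inl ` {1..N} \<union> Inr ` ({1..N} \<times> UNIV))"
    and x_indep: "prob_space.indep_set M
        (sigma_sets (space M) {(\<lambda>\<omega> i. x i \<omega>) -` A \<inter> space M | A.
            A \<in> sets (Pi\<^sub>M UNIV (\<lambda>_. borel))})
        (sigma_sets (space M) {(\<lambda>\<omega>. restrict (\<lambda>k. case k of Inl n \<Rightarrow> g n \<omega> | Inr (n, i) \<Rightarrow> h n i \<omega>)
                 (Inl ` {1..N} \<union> Inr ` ({1..N} \<times> UNIV))) -` A \<inter> space M | A.
            A \<in> sets (Pi\<^sub>M (Inl ` {1..N} \<union> Inr ` ({1..N} \<times> UNIV)) (\<lambda>_. borel))})"
  defines "ratio \<equiv>
      (\<integral>\<omega>. (\<Sum>n=1..N. g n \<omega> / interf d \<alpha> h x n \<omega>) \<partial>M) /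
      (\<integral>\<omega>. Max ((\<lambda>n. g n \<omega> / interf d \<alpha> h x n \<omega>) ` {1..N}) \<partial>M)"
  shows "ratio \<le> real N * (\<integral>\<omega>. g 1 \<omega> \<partial>M) / (\<integral>\<omega>. Max ((\<lambda>n. g n \<omega>) ` {1..N}) \<partial>M)
         \<and> (mD = 1 \<and> mI = 1 \<longrightarrow> ratio \<le> real N / (\<Sum>n=1..N. 1 / real n))"
proof -
  interpret prob_space M by fact
  interpret fading_model M N x g h
    using ppp gh_indep x_indep by unfold_locales (simp_all add: is_ppp_def)
  interpret G: iid_nonneg M "{1..N}" g "density lborel (\<lambda>t. ennreal (gamma_density mD (1 / mD) t))"
    by (rule iid_nonneg_gains[OF \<open>N \<ge> 1\<close> g_distr]) (auto simp: gamma_density_def)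
  have g_mean: "(\<integral>\<^sup>+\<omega>. g 1 \<omega> \<partial>M) = 1"
    using \<open>N \<ge> 1\<close> \<open>mD \<ge> 1\<close> by (intro gamma_distributed_nn_integral[OF _ g_distr]) auto
  have bound: "ratio \<le> real N * (\<integral>\<omega>. g 1 \<omega> \<partial>M) / (\<integral>\<omega>. Max ((\<lambda>n. g n \<omega>) ` {1..N}) \<partial>M)"
    unfolding ratio_def using \<open>lam > 0\<close>
    by (intro mrc_div_selection_le[OF \<open>N \<ge> 1\<close> G.iid_nonneg_axioms g_mean[folded ennreal_1] _ ppp _
          \<open>2 < \<alpha>\<close> \<open>0 < mI\<close> h_distr]) auto
  moreover have "ratio \<le> real N / (\<Sum>n=1..N. 1 / real n)" if "mD = 1"
  proof -
    have "(\<integral>\<omega>. g 1 \<omega> \<partial>M) = 1"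
      using \<open>N \<ge> 1\<close> g_mean G.nonneg by (subst integral_eq_nn_integral) (auto elim!: AE_mp)
    moreover have "(\<integral>\<omega>. Max ((\<lambda>n. g n \<omega>) ` {1..N}) \<partial>M) = (\<Sum>n=1..N. 1 / real n)"
      using integral_Max_exponential[OF _ _ gains_indep gamma_distributed_exponential] g_distr
        \<open>N \<ge> 1\<close> that
      by simp
    ultimately show ?thesis using bound by simp
  qed
  ultimately show ?thesis by blast
qed

end
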